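(* Consider the 2-user broadcast channel over $\mathbb F_3$ with inputs $X_1,X_2\in\mathbb F_3$, in which at each channel use a coefficient $G$ uniform on $\mathbb F_3^\times=\{1,-1\}$ is drawn, independent of the inputs and i.i.d. across channel uses, Rx-1 observes $\overline Y_1=X_1$ and Rx-2 observes $\overline Y_2=(GX_1+X_2,\,G)$. This channel is semi-deterministic, and its sum-capacities with and without NS-assistance are $$C_\Sigma^{\mathrm{NS}}=2\log_2 3,\qquad C_\Sigma=1.5\log_2 3,$$ so that $C_\Sigma^{\mathrm{NS}}/C_\Sigma=4/3$.
   Context: Coding framework: messages $W_1,W_2$ independent and uniform on finite sets $\mathcal M_1,\mathcal M_2$, the transmitter controls $(X_1,X_2)$. Classical scheme: stochastic encoder from messages to the $n$ input symbols and stochastic decoders $\hat W_k=\psi_k(\overline Y_k^{[n]})$. A $\kappa$-partite NS box is a conditional pmf of outputs given inputs (finite output alphabets) such that for every subset of parties the marginal of their outputs depends only on their inputs. NS-assisted scheme: a 3-partite NS box where the transmitter inputs $(W_1,W_2)$ and obtains the channel input sequence as output, and Rx-$k$ inputs $\overline Y_k^{[n]}$ and obtains $\hat W_k$; the joint law is the box distribution times the channel law times $1/(|\mathcal M_1||\mathcal M_2|)$. Rate pairs are achievable if there is a sequence of schemes with vanishing $\max_k\Pr(\hat W_k\ne W_k)$ and $\lim_n\frac1n\log_2|\mathcal M_k^{(n)}|\ge R_k$; capacity region = closure; sum-capacity = max of $R_1+R_2$. *)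

theory Defs
  imports "HOL-Analysis.Analysis" "HOL-Library.Numeral_Type"
begin

text \<open>General framework: a 2-user broadcast channel with finite input alphabet 'x,
  output alphabets 'y1 (Rx-1) and 'y2 (Rx-2), given by its joint transition law
  W x (y1,y2).\<close>

definition lists_n :: "nat \<Rightarrow> 'a list set" where
  "lists_n n = {xs. length xs = n}"

definition chan_n :: "('x \<Rightarrow> 'y1 \<times> 'y2 \<Rightarrow> real) \<Rightarrow> 'x list \<Rightarrow> 'y1 list \<Rightarrow> 'y2 list \<Rightarrow> real" where
  "chan_n W xs ys1 ys2 = (\<Prod>i<length xs. W (xs ! i) (ys1 ! i, ys2 ! i))"

definition classical_scheme ::
  "nat \<Rightarrow> nat \<Rightarrow> nat \<Rightarrow> (nat \<Rightarrow> nat \<Rightarrow> 'x list \<Rightarrow> real)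
   \<Rightarrow> ('y1 list \<Rightarrow> nat \<Rightarrow> real) \<Rightarrow> ('y2 list \<Rightarrow> nat \<Rightarrow> real) \<Rightarrow> bool" where
  "classical_scheme n m1 m2 E D1 D2 \<longleftrightarrow>
     m1 \<ge> 1 \<and> m2 \<ge> 1 \<and>
     (\<forall>w1<m1. \<forall>w2<m2. (\<forall>xs\<in>lists_n n. E w1 w2 xs \<ge> 0) \<and> (\<Sum>xs\<in>lists_n n. E w1 w2 xs) = 1) \<and>
     (\<forall>ys\<in>lists_n n. (\<forall>w<m1. D1 ys w \<ge> 0) \<and> (\<Sum>w<m1. D1 ys w) = 1) \<and>
     (\<forall>ys\<in>lists_n n. (\<forall>w<m2. D2 ys w \<ge> 0) \<and> (\<Sum>w<m2. D2 ys w) = 1)"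

definition classical_err1 ::
  "('x \<Rightarrow> 'y1 \<times> 'y2 \<Rightarrow> real) \<Rightarrow> nat \<Rightarrow> nat \<Rightarrow> nat \<Rightarrow> (nat \<Rightarrow> nat \<Rightarrow> 'x list \<Rightarrow> real)
   \<Rightarrow> ('y1 list \<Rightarrow> nat \<Rightarrow> real) \<Rightarrow> real" where
  "classical_err1 W n m1 m2 E D1 = 1 -
     (\<Sum>w1<m1. \<Sum>w2<m2. \<Sum>xs\<in>lists_n n. \<Sum>ys1\<in>lists_n n. \<Sum>ys2\<in>lists_n n.
        E w1 w2 xs * chan_n W xs ys1 ys2 * D1 ys1 w1) / (real m1 * real m2)"

definition classical_err2 ::
  "('x \<Rightarrow> 'y1 \<times> 'y2 \<Rightarrow> real) \<Rightarrow> nat \<Rightarrow> nat \<Rightarrow> nat \<Rightarrow> (nat \<Rightarrow> nat \<Rightarrow> 'x list \<Rightarrow> real)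
   \<Rightarrow> ('y2 list \<Rightarrow> nat \<Rightarrow> real) \<Rightarrow> real" where
  "classical_err2 W n m1 m2 E D2 = 1 -
     (\<Sum>w1<m1. \<Sum>w2<m2. \<Sum>xs\<in>lists_n n. \<Sum>ys1\<in>lists_n n. \<Sum>ys2\<in>lists_n n.
        E w1 w2 xs * chan_n W xs ys1 ys2 * D2 ys2 w2) / (real m1 * real m2)"

text \<open>A 3-partite NS box P w ys1 ys2 xs a b = Pr(Tx outputs xs, Rx-1 outputs a, Rx-2 outputs b
  | Tx input w = (w1,w2), Rx-1 input ys1, Rx-2 input ys2). Non-signaling condition is
  imposed for every nonempty proper subset of the three parties.\<close>
definition ns_box ::
  "nat \<Rightarrow> nat \<Rightarrow> nat \<Rightarrow> (nat \<times> nat \<Rightarrow> 'y1 list \<Rightarrow> 'y2 list \<Rightarrow> 'x list \<Rightarrow> nat \<Rightarrow> nat \<Rightarrow> real) \<Rightarrow> bool" where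
  "ns_box n m1 m2 P \<longleftrightarrow>
     m1 \<ge> 1 \<and> m2 \<ge> 1 \<and>
     (\<forall>w\<in>{..<m1} \<times> {..<m2}. \<forall>y1\<in>lists_n n. \<forall>y2\<in>lists_n n.
        (\<forall>x\<in>lists_n n. \<forall>a<m1. \<forall>b<m2. P w y1 y2 x a b \<ge> 0) \<and>
        (\<Sum>x\<in>lists_n n. \<Sum>a<m1. \<Sum>b<m2. P w y1 y2 x a b) = 1) \<and>
     (\<forall>w\<in>{..<m1} \<times> {..<m2}. \<forall>w'\<in>{..<m1} \<times> {..<m2}.
      \<forall>y1\<in>lists_n n. \<forall>y1'\<in>lists_n n. \<forall>y2\<in>lists_n n. \<forall>y2'\<in>lists_n n.
        (\<forall>x\<in>lists_n n. \<forall>a<m1.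
            (\<Sum>b<m2. P w y1 y2 x a b) = (\<Sum>b<m2. P w y1 y2' x a b)) \<and>
        (\<forall>x\<in>lists_n n. \<forall>b<m2.
            (\<Sum>a<m1. P w y1 y2 x a b) = (\<Sum>a<m1. P w y1' y2 x a b)) \<and>
        (\<forall>a<m1. \<forall>b<m2.
            (\<Sum>x\<in>lists_n n. P w y1 y2 x a b) = (\<Sum>x\<in>lists_n n. P w' y1 y2 x a b)) \<and>
        (\<forall>x\<in>lists_n n.
            (\<Sum>a<m1. \<Sum>b<m2. P w y1 y2 x a b) = (\<Sum>a<m1. \<Sum>b<m2. P w y1' y2' x a b)) \<and>
        (\<forall>a<m1.
            (\<Sum>x\<in>lists_n n. \<Sum>b<m2. P w y1 y2 x a b) = (\<Sum>x\<in>lists_n n. \<Sum>b<m2. P w' y1 y2' x a b)) \<and>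
        (\<forall>b<m2.
            (\<Sum>x\<in>lists_n n. \<Sum>a<m1. P w y1 y2 x a b) = (\<Sum>x\<in>lists_n n. \<Sum>a<m1. P w' y1' y2 x a b)))"

definition ns_err1 ::
  "('x \<Rightarrow> 'y1 \<times> 'y2 \<Rightarrow> real) \<Rightarrow> nat \<Rightarrow> nat \<Rightarrow> nat
   \<Rightarrow> (nat \<times> nat \<Rightarrow> 'y1 list \<Rightarrow> 'y2 list \<Rightarrow> 'x list \<Rightarrow> nat \<Rightarrow> nat \<Rightarrow> real) \<Rightarrow> real" where
  "ns_err1 W n m1 m2 P = 1 -
     (\<Sum>w1<m1. \<Sum>w2<m2. \<Sum>xs\<in>lists_n n. \<Sum>ys1\<in>lists_n n. \<Sum>ys2\<in>lists_n n. \<Sum>b<m2.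
        P (w1, w2) ys1 ys2 xs w1 b * chan_n W xs ys1 ys2) / (real m1 * real m2)"

definition ns_err2 ::
  "('x \<Rightarrow> 'y1 \<times> 'y2 \<Rightarrow> real) \<Rightarrow> nat \<Rightarrow> nat \<Rightarrow> nat
   \<Rightarrow> (nat \<times> nat \<Rightarrow> 'y1 list \<Rightarrow> 'y2 list \<Rightarrow> 'x list \<Rightarrow> nat \<Rightarrow> nat \<Rightarrow> real) \<Rightarrow> real" where
  "ns_err2 W n m1 m2 P = 1 -
     (\<Sum>w1<m1. \<Sum>w2<m2. \<Sum>xs\<in>lists_n n. \<Sum>ys1\<in>lists_n n. \<Sum>ys2\<in>lists_n n. \<Sum>a<m1.
        P (w1, w2) ys1 ys2 xs a w2 * chan_n W xs ys1 ys2) / (real m1 * real m2)"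

definition rate_ge :: "(nat \<Rightarrow> nat) \<Rightarrow> real \<Rightarrow> bool" where
  "rate_ge m R \<longleftrightarrow> (\<forall>\<epsilon>>0. eventually (\<lambda>n. log 2 (real (m n)) / real n \<ge> R - \<epsilon>) sequentially)"

definition achievable_classical :: "('x \<Rightarrow> 'y1 \<times> 'y2 \<Rightarrow> real) \<Rightarrow> real \<times> real \<Rightarrow> bool" where
  "achievable_classical W R \<longleftrightarrow>
     fst R \<ge> 0 \<and> snd R \<ge> 0 \<and>
     (\<exists>(m1 :: nat \<Rightarrow> nat) (m2 :: nat \<Rightarrow> nat) E D1 D2.
        (\<forall>n. classical_scheme n (m1 n) (m2 n) (E n) (D1 n) (D2 n)) \<and>
        (\<lambda>n. max (classical_err1 W n (m1 n) (m2 n) (E n) (D1 n))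
                  (classical_err2 W n (m1 n) (m2 n) (E n) (D2 n))) \<longlonglongrightarrow> 0 \<and>
        rate_ge m1 (fst R) \<and> rate_ge m2 (snd R))"

definition achievable_ns :: "('x \<Rightarrow> 'y1 \<times> 'y2 \<Rightarrow> real) \<Rightarrow> real \<times> real \<Rightarrow> bool" where
  "achievable_ns W R \<longleftrightarrow>
     fst R \<ge> 0 \<and> snd R \<ge> 0 \<and>
     (\<exists>(m1 :: nat \<Rightarrow> nat) (m2 :: nat \<Rightarrow> nat)
        (P :: nat \<Rightarrow> nat \<times> nat \<Rightarrow> 'y1 list \<Rightarrow> 'y2 list \<Rightarrow> 'x list \<Rightarrow> nat \<Rightarrow> nat \<Rightarrow> real).
        (\<forall>n. ns_box n (m1 n) (m2 n) (P n)) \<and>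
        (\<lambda>n. max (ns_err1 W n (m1 n) (m2 n) (P n)) (ns_err2 W n (m1 n) (m2 n) (P n))) \<longlonglongrightarrow> 0 \<and>
        rate_ge m1 (fst R) \<and> rate_ge m2 (snd R))"

definition capacity_region :: "('x \<Rightarrow> 'y1 \<times> 'y2 \<Rightarrow> real) \<Rightarrow> (real \<times> real) set" where
  "capacity_region W = closure {R. achievable_classical W R}"

definition capacity_region_ns :: "('x \<Rightarrow> 'y1 \<times> 'y2 \<Rightarrow> real) \<Rightarrow> (real \<times> real) set" where
  "capacity_region_ns W = closure {R. achievable_ns W R}"

definition is_sum_capacity :: "(real \<times> real) set \<Rightarrow> real \<Rightarrow> bool" where
  "is_sum_capacity S c \<longleftrightarrow> (\<exists>R\<in>S. fst R + snd R = c) \<and> (\<forall>R\<in>S. fst R + snd R \<le> c)"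

definition semi_deterministic :: "('x \<Rightarrow> 'y1 \<times> 'y2 \<Rightarrow> real) \<Rightarrow> bool" where
  "semi_deterministic W \<longleftrightarrow>
     (\<exists>f. \<forall>x y1. (\<Sum>y2\<in>UNIV. W x (y1, y2)) = (if y1 = f x then 1 else 0)) \<or>
     (\<exists>f. \<forall>x y2. (\<Sum>y1\<in>UNIV. W x (y1, y2)) = (if y2 = f x then 1 else 0))"

text \<open>The specific channel over F_3 (type 3 of HOL-Library.Numeral_Type, arithmetic mod 3):
  input (x1,x2); G uniform on {1,-1}; Rx-1 sees x1; Rx-2 sees (G x1 + x2, G).\<close>
definition bc3 :: "3 \<times> 3 \<Rightarrow> 3 \<times> (3 \<times> 3) \<Rightarrow> real" where
  "bc3 x y = (\<Sum>g\<in>{1, -1 :: 3}. (1/2) *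
       (if fst y = fst x \<and> snd y = (g * fst x + snd x, g) then 1 else 0))"

end

(*
  With non-signalling assistance, inclusion-exclusion over the box outputs gives
  m1 m2 (1 - e1 - e2) <= |X|^n for every channel, so the sum rate is at most log 9 = 2 log 3.
  This is attained with zero error: the box hides enc(W2) under a uniform pad t in
  X2 = enc(W2) + t and, knowing W1, hands Rx-2 the value G X1 + X2 - G enc(W1) - t. Since t is
  uniform, Rx-2's box output is uniform whatever the messages are, so the box is non-signalling.

  Classically, the outputs of Rx-2 for G = g and G = -g together determine the input, while
  Rx-1's output takes only 3^n values. Averaging Rx-2's success over g and -g, the inequality
  a + (b + c)/2 <= 3/2 + abc/2 on the unit cube and the bound sqrt(AB) <= (A + B)/2 on the
  joint success give m1 m2 (1 - 2 (e1 + e2)) <= (3 sqrt 3)^n, i.e. a sum rate of at most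
  3/2 log 3. Sending W1 uncoded in X1 and a random codeword c(W2) as X2 = c(W2) - X1, which
  Rx-2 decodes from the roughly n/2 positions where G = 1, approaches (log 3, 1/2 log 3).
*)

theory Submission
  imports Defs
begin

lemma sum_swap3: "(\<Sum>a\<in>A. \<Sum>b\<in>B. \<Sum>c\<in>C. f a b c) = (\<Sum>c\<in>C. \<Sum>a\<in>A. \<Sum>b\<in>B. f a b c)"
proof -
  have "(\<Sum>a\<in>A. \<Sum>b\<in>B. \<Sum>c\<in>C. f a b c) = (\<Sum>a\<in>A. \<Sum>c\<in>C. \<Sum>b\<in>B. f a b c)"
    by (rule sum.cong[OF refl sum.swap])
  also have "\<dots> = (\<Sum>c\<in>C. \<Sum>a\<in>A. \<Sum>b\<in>B. f a b c)"
    by (rule sum.swap)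
  finally show ?thesis .
qed

lemma sum_sum_delta_mult:
  fixes a :: "'a::finite" and b :: "'b::finite"
  shows "(\<Sum>y1\<in>UNIV. \<Sum>y2\<in>UNIV. of_bool (y1 = a \<and> y2 = b) * F y1 y2) = (F a b :: real)"
  by (simp add: of_bool_conj mult.assoc flip: sum_distrib_left)

lemma sum_swap_of_bool_eq:
  assumes "finite B" and "\<And>t. t \<in> T \<Longrightarrow> d t \<in> B"
  shows "(\<Sum>b\<in>B. \<Sum>t\<in>T. of_bool (b = d t) * f b t) = (\<Sum>t\<in>T. f (d t) t :: real)"
proof -
  have "(\<Sum>b\<in>B. \<Sum>t\<in>T. of_bool (b = d t) * f b t) = (\<Sum>t\<in>T. \<Sum>b\<in>B. of_bool (b = d t) * f b t)"
    by (rule sum.swap)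
  also have "\<dots> = (\<Sum>t\<in>T. f (d t) t)"
    using assms by (intro sum.cong refl) simp
  finally show ?thesis .
qed

lemma sum_row_plus_sum_col_le:
  fixes Q :: "nat \<Rightarrow> nat \<Rightarrow> real"
  assumes nonneg: "\<And>a b. a < m1 \<Longrightarrow> b < m2 \<Longrightarrow> Q a b \<ge> 0" and i: "i < m1" and j: "j < m2"
  shows "(\<Sum>b<m2. Q i b) + (\<Sum>a<m1. Q a j) \<le> Q i j + (\<Sum>a<m1. \<Sum>b<m2. Q a b)"
proof -
  have "(\<Sum>a\<in>{..<m1} - {i}. Q a j) \<le> (\<Sum>a\<in>{..<m1} - {i}. \<Sum>b<m2. Q a b)"
    using nonneg j by (intro sum_mono member_le_sum) auto
  moreover have "(\<Sum>a<m1. Q a j) = Q i j + (\<Sum>a\<in>{..<m1} - {i}. Q a j)"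
    and "(\<Sum>a<m1. \<Sum>b<m2. Q a b) = (\<Sum>b<m2. Q i b) + (\<Sum>a\<in>{..<m1} - {i}. \<Sum>b<m2. Q a b)"
    using i by (simp_all add: sum.remove)
  ultimately show ?thesis
    by linarith
qed

lemma sum_mult_comp_le:
  fixes E D :: "_ \<Rightarrow> real"
  assumes "finite A" "finite B" "h ` A \<subseteq> B"
    and "\<And>x. x \<in> A \<Longrightarrow> 0 \<le> E x" "sum E A \<le> 1" "\<And>v. v \<in> B \<Longrightarrow> 0 \<le> D v"
  shows "(\<Sum>x\<in>A. E x * D (h x)) \<le> (\<Sum>v\<in>B. D v)"
proof -
  have "(\<Sum>x\<in>A. E x * D (h x)) = (\<Sum>v\<in>h ` A. \<Sum>x\<in>{x\<in>A. h x = v}. E x * D (h x))"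
    using assms(1) by (rule sum.image_gen)
  also have "\<dots> = (\<Sum>v\<in>h ` A. D v * (\<Sum>x\<in>{x\<in>A. h x = v}. E x))"
    by (simp add: sum_distrib_left mult.commute)
  also have "\<dots> \<le> (\<Sum>v\<in>h ` A. D v)"
  proof (intro sum_mono mult_right_le_one_le)
    fix v
    assume "v \<in> h ` A"
    have "(\<Sum>x\<in>{x\<in>A. h x = v}. E x) \<le> sum E A"
      using assms by (intro sum_mono2) auto
    then show "(\<Sum>x\<in>{x\<in>A. h x = v}. E x) \<le> 1"
      using assms by linarith
  qed (use assms in \<open>auto intro: sum_nonneg\<close>)
  also have "\<dots> \<le> (\<Sum>v\<in>B. D v)"
    using assms by (intro sum_mono2) auto
  finally show ?thesis .
qed

lemma sum_mult_le_of_inj_pair: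
  fixes f g :: "_ \<Rightarrow> real"
  assumes "inj_on (\<lambda>x. (h1 x, h2 x)) A" "finite B1" "finite B2" "h1 ` A \<subseteq> B1" "h2 ` A \<subseteq> B2"
    and "\<And>y. y \<in> B1 \<Longrightarrow> 0 \<le> f y" "\<And>y. y \<in> B2 \<Longrightarrow> 0 \<le> g y"
  shows "(\<Sum>x\<in>A. f (h1 x) * g (h2 x)) \<le> (\<Sum>y\<in>B1. f y) * (\<Sum>y\<in>B2. g y)"
proof -
  have "(\<Sum>x\<in>A. f (h1 x) * g (h2 x)) = (\<Sum>p\<in>(\<lambda>x. (h1 x, h2 x)) ` A. f (fst p) * g (snd p))"
    using assms(1) by (simp add: sum.reindex)
  also have "\<dots> \<le> (\<Sum>p\<in>B1 \<times> B2. f (fst p) * g (snd p))"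
    using assms by (intro sum_mono2) (auto intro: mult_nonneg_nonneg)
  also have "\<dots> = (\<Sum>y\<in>B1. f y) * (\<Sum>y\<in>B2. g y)"
    by (simp add: sum_product sum.cartesian_product case_prod_beta)
  finally show ?thesis .
qed

lemma sum_PiE_pair:
  fixes h :: "'b \<Rightarrow> 'b \<Rightarrow> real"
  assumes I: "finite I" "a \<in> I" "b \<in> I" "a \<noteq> b" and A: "finite A"
  shows "(\<Sum>c\<in>PiE I (\<lambda>_. A). h (c a) (c b)) = real (card A) ^ (card I - 2) * (\<Sum>u\<in>A. \<Sum>v\<in>A. h u v)"
proof -
  \<comment> \<open>the indicator of \<open>c a = u \<and> c b = v\<close> as a product over \<open>I\<close>, so that \<open>prod_sum_PiE\<close> applies\<close>
  define f :: "'b \<Rightarrow> 'b \<Rightarrow> 'a \<Rightarrow> 'b \<Rightarrow> real"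
    where "f u v i x = (if i = a then of_bool (x = u)
      else if i = b then of_bool (x = v) else 1)" for u v i x
  have prod: "(\<Prod>i\<in>I. F i) = F a * F b * (\<Prod>i\<in>I - {a} - {b}. F i)" for F :: "'a \<Rightarrow> real"
    using I by (simp add: prod.remove mult.assoc)
  have "(\<Sum>c\<in>PiE I (\<lambda>_. A). h (c a) (c b)) =
      (\<Sum>c\<in>PiE I (\<lambda>_. A). \<Sum>u\<in>A. \<Sum>v\<in>A. of_bool (u = c a) * (of_bool (v = c b) * h u v))"
    using I A by (intro sum.cong refl) (auto simp: PiE_iff simp flip: sum_distrib_left)
  also have "\<dots> = (\<Sum>u\<in>A. \<Sum>v\<in>A. (\<Sum>c\<in>PiE I (\<lambda>_. A). \<Prod>i\<in>I. f u v i (c i)) * h u v)"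
    unfolding sum_swap3[where C = "PiE I (\<lambda>_. A)", symmetric]
  proof (intro sum.cong refl)
    fix u v
    have ind: "of_bool (u = c a) * of_bool (v = c b) = (\<Prod>i\<in>I. f u v i (c i))" for c
      using I by (subst prod) (auto simp: f_def intro!: prod.neutral)
    show "(\<Sum>c\<in>PiE I (\<lambda>_. A). of_bool (u = c a) * (of_bool (v = c b) * h u v)) =
        (\<Sum>c\<in>PiE I (\<lambda>_. A). \<Prod>i\<in>I. f u v i (c i)) * h u v"
      unfolding mult.assoc[symmetric] ind sum_distrib_right ..
  qed
  also have "\<dots> = (\<Sum>u\<in>A. \<Sum>v\<in>A. real (card A) ^ (card I - 2) * h u v)"
  proof (intro sum.cong refl)
    fix u v
    assume "u \<in> A" "v \<in> A"
    then have "(\<Prod>i\<in>I. \<Sum>x\<in>A. f u v i x) = (\<Prod>i\<in>I - {a} - {b}. real (card A))"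
      using I A by (subst prod) (auto simp: f_def intro!: prod.cong)
    then show "(\<Sum>c\<in>PiE I (\<lambda>_. A). \<Prod>i\<in>I. f u v i (c i)) * h u v =
        real (card A) ^ (card I - 2) * h u v"
      using I A by (simp add: prod_sum_PiE[symmetric] card_Diff_singleton_if numeral_2_eq_2)
  qed
  finally show ?thesis
    by (simp add: sum_distrib_left)
qed

lemma le_sqrt_mult_mean:
  fixes T A v u :: real
  assumes "0 \<le> T" "T \<le> A" "T \<le> v * u" "0 \<le> v" "0 \<le> u"
  shows "T \<le> sqrt A * ((v + u) / 2)"
proof (rule power2_le_imp_le)
  have "v * u \<le> ((v + u) / 2)\<^sup>2"
    using sum_squares_ge_zero[of "(v - u) / 2" 0] by (simp add: power2_eq_square field_simps)
  then have "T\<^sup>2 \<le> A * ((v + u) / 2)\<^sup>2"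
    unfolding power2_eq_square using assms by (intro mult_mono) auto
  also have "\<dots> = (sqrt A * ((v + u) / 2))\<^sup>2"
    using assms by (simp only: power_mult_distrib real_sqrt_pow2)
  finally show "T\<^sup>2 \<le> (sqrt A * ((v + u) / 2))\<^sup>2" .
qed (use assms in simp)

lemma unit_cube_bound:
  fixes a b c :: real
  assumes "0 \<le> a" "a \<le> 1" "0 \<le> b" "b \<le> 1" "0 \<le> c" "c \<le> 1"
  shows "a + (b + c) / 2 \<le> 3 / 2 + a * b * c / 2"
proof -
  have "b * c \<le> 1"
    using assms by (simp add: mult_le_one)
  then have "a * (1 - b * c / 2) \<le> 1 - b * c / 2"
    using assms by (intro mult_left_le_one_le) auto
  moreover have "0 \<le> (1 - b) * (1 - c)"
    using assms by simp
  ultimately have "a + b * c / 2 \<le> 1 + a * b * c / 2" "b + c \<le> 1 + b * c"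
    by (simp_all add: algebra_simps)
  then show ?thesis
    by (simp add: field_simps)
qed

definition lists_of_len :: "'a set \<Rightarrow> nat \<Rightarrow> 'a list set" where
  "lists_of_len A n = {xs. set xs \<subseteq> A \<and> length xs = n}"

lemma lists_n_eq_lists_of_len: "lists_n n = lists_of_len UNIV n"
  by (simp add: lists_n_def lists_of_len_def)

lemma mem_lists_of_len_iff: "xs \<in> lists_of_len A n \<longleftrightarrow> set xs \<subseteq> A \<and> length xs = n"
  by (simp add: lists_of_len_def)

lemma mem_lists_n_iff [simp]: "xs \<in> lists_n n \<longleftrightarrow> length xs = n"
  by (simp add: lists_n_def)

lemma lists_n_0 [simp]: "lists_n 0 = {[]}"
  by (auto simp: lists_n_def)

lemma finite_lists_of_len [simp]: "finite A \<Longrightarrow> finite (lists_of_len A n)"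
  unfolding lists_of_len_def by (rule finite_lists_length_eq)

lemma card_lists_of_len: "finite A \<Longrightarrow> card (lists_of_len A n) = card A ^ n"
  unfolding lists_of_len_def by (rule card_lists_length_eq)

lemma finite_lists_n [simp]: "finite (lists_n n :: 'a::finite list set)"
  by (simp add: lists_n_eq_lists_of_len)

lemma card_lists_n: "card (lists_n n :: 'a::finite list set) = CARD('a) ^ n"
  by (simp add: lists_n_eq_lists_of_len card_lists_of_len)

lemma sum_lists_of_len_Suc:
  assumes "finite A"
  shows "(\<Sum>xs\<in>lists_of_len A (Suc n). f xs) = (\<Sum>a\<in>A. \<Sum>xs\<in>lists_of_len A n. f (a # xs))"
proof -
  have "lists_of_len A (Suc n) = (\<lambda>(a, xs). a # xs) ` (A \<times> lists_of_len A n)"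
    by (auto simp: lists_of_len_def length_Suc_conv)
  moreover have "inj_on (\<lambda>(a, xs). a # xs) (A \<times> lists_of_len A n)"
    by (auto simp: inj_on_def)
  ultimately show ?thesis
    using assms by (simp add: sum.reindex sum.cartesian_product case_prod_beta')
qed

lemma sum_lists_n_Suc:
  "(\<Sum>xs\<in>lists_n (Suc n). f xs) = (\<Sum>a\<in>(UNIV::'a::finite set). \<Sum>xs\<in>lists_n n. f (a # xs))"
  by (simp add: lists_n_eq_lists_of_len sum_lists_of_len_Suc)

text \<open>Reducing \<open>w\<close> modulo the number of lists makes \<open>list_enum n w\<close> a list of length \<open>n\<close> for every
  \<open>w\<close>; only \<open>w < CARD('a) ^ n\<close> is ever used as a message.\<close>

definition list_enum :: "nat \<Rightarrow> nat \<Rightarrow> 'a::finite list" where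
  "list_enum n w = (SOME f. bij_betw f {..<CARD('a) ^ n} (lists_n n)) (w mod CARD('a) ^ n)"

definition list_index :: "nat \<Rightarrow> 'a::finite list \<Rightarrow> nat" where
  "list_index n = inv_into {..<CARD('a) ^ n} (list_enum n)"

lemma bij_betw_list_enum:
  "bij_betw (list_enum n :: nat \<Rightarrow> 'a::finite list) {..<CARD('a) ^ n} (lists_n n)"
proof -
  have "\<exists>f. bij_betw f {..<CARD('a) ^ n} (lists_n n :: 'a list set)"
    by (intro finite_same_card_bij) (auto simp: card_lists_n)
  then have "bij_betw (SOME f. bij_betw f {..<CARD('a) ^ n} (lists_n n :: 'a list set))
      {..<CARD('a) ^ n} (lists_n n)"
    by (rule someI_ex)
  then show ?thesis
    unfolding list_enum_def by (rule bij_betw_cong[THEN iffD1, rotated]) simp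
qed

lemma length_list_enum [simp]: "length (list_enum n w :: 'a::finite list) = n"
proof -
  have "(list_enum n w :: 'a list) = list_enum n (w mod CARD('a) ^ n)"
    by (simp add: list_enum_def)
  also have "\<dots> \<in> lists_n n"
    using bij_betw_list_enum by (rule bij_betw_apply) simp
  finally show ?thesis
    by simp
qed

lemma list_index_list_enum [simp]:
  "w < CARD('a) ^ n \<Longrightarrow> list_index n (list_enum n w :: 'a::finite list) = w"
  using bij_betw_list_enum[where 'a='a] unfolding list_index_def bij_betw_def by simp

lemma list_index_less: "length xs = n \<Longrightarrow> list_index n (xs :: 'a::finite list) < CARD('a) ^ n"
  using bij_betw_list_enum[where 'a='a] unfolding list_index_def bij_betw_def
  by (auto intro!: inv_into_into[THEN lessThan_iff[THEN iffD1]])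

lemma list_index_less_3: "length xs = n \<Longrightarrow> list_index n (xs :: 3 list) < 3 ^ n"
  by (drule list_index_less[where 'a = 3]) simp

lemma sum_of_bool_eq_list_index:
  "(\<Sum>s\<in>lists_n n. of_bool (b = list_index n (s :: 'a::finite list))) =
      (of_bool (b < CARD('a) ^ n) :: real)"
proof -
  have "bij_betw (list_index n) (lists_n n :: 'a list set) {..<CARD('a) ^ n}"
    unfolding list_index_def by (rule bij_betw_inv_into[OF bij_betw_list_enum])
  then have "(\<Sum>s\<in>lists_n n. of_bool (b = list_index n (s :: 'a list))) =
      (\<Sum>c<CARD('a) ^ n. of_bool (b = c) :: real)"
    by (rule sum.reindex_bij_betw)
  then show ?thesis
    by simp
qed

abbreviation signs :: "nat \<Rightarrow> 3 list set" where
  "signs n \<equiv> lists_of_len {1, -1} n"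

lemma card_signs: "card (signs n) = 2 ^ n"
  by (simp add: card_lists_of_len numeral_2_eq_2)

lemma sum_signs_Suc:
  "(\<Sum>g\<in>signs (Suc n). f g) = (\<Sum>g\<in>signs n. f (1 # g)) + (\<Sum>g\<in>signs n. f (-1 # g))"
  by (simp add: sum_lists_of_len_Suc)

lemma sum_signs_eq_const:
  "(\<And>g. g \<in> signs n \<Longrightarrow> f g = c) \<Longrightarrow> (\<Sum>g\<in>signs n. f g) / 2 ^ n = (c :: real)"
  by (simp add: card_signs)

lemma signs_uminus: "g \<in> signs n \<Longrightarrow> map uminus g \<in> signs n"
  by (auto simp: mem_lists_of_len_iff)

lemma sum_signs_uminus: "(\<Sum>g\<in>signs n. f (map uminus g)) = (\<Sum>g\<in>signs n. f g)"
  by (rule sum.reindex_bij_witness[of _ "map uminus" "map uminus"])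
    (auto simp: signs_uminus comp_def)

definition stochastic_kernel :: "('x \<Rightarrow> 'y \<Rightarrow> real) \<Rightarrow> bool" where
  "stochastic_kernel W \<longleftrightarrow> (\<forall>x y. 0 \<le> W x y) \<and> (\<forall>x. (\<Sum>y\<in>UNIV. W x y) = 1)"

lemma chan_n_Nil [simp]: "chan_n W [] ys1 ys2 = 1"
  by (simp add: chan_n_def)

lemma chan_n_Cons [simp]:
  "chan_n W (x # xs) (y1 # ys1) (y2 # ys2) = W x (y1, y2) * chan_n W xs ys1 ys2"
  unfolding chan_n_def by (simp only: length_Cons prod.lessThan_Suc_shift) simp

definition chan_avg ::
  "('x \<Rightarrow> 'y1 \<times> 'y2 \<Rightarrow> real) \<Rightarrow> nat \<Rightarrow> 'x list \<Rightarrow> ('y1 list \<Rightarrow> 'y2 list \<Rightarrow> real) \<Rightarrow> real" where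
  "chan_avg W n xs f = (\<Sum>ys1\<in>lists_n n. \<Sum>ys2\<in>lists_n n. chan_n W xs ys1 ys2 * f ys1 ys2)"

lemma chan_avg_Suc:
  fixes W :: "'x \<Rightarrow> 'y1::finite \<times> 'y2::finite \<Rightarrow> real"
  shows "chan_avg W (Suc n) (x # xs) f =
    (\<Sum>y1\<in>UNIV. \<Sum>y2\<in>UNIV. W x (y1, y2) * chan_avg W n xs (\<lambda>ys1 ys2. f (y1 # ys1) (y2 # ys2)))"
  unfolding chan_avg_def
  by (simp add: sum_lists_n_Suc sum_distrib_left mult.assoc sum.swap[of _ "lists_n n" UNIV])

lemma chan_avg_sum:
  "chan_avg W n xs (\<lambda>ys1 ys2. \<Sum>i\<in>I. f i ys1 ys2) = (\<Sum>i\<in>I. chan_avg W n xs (f i))"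
  unfolding chan_avg_def by (simp add: sum_distrib_left sum.swap[of _ I])

lemma chan_avg_add:
  "chan_avg W n xs (\<lambda>ys1 ys2. f ys1 ys2 + g ys1 ys2) = chan_avg W n xs f + chan_avg W n xs g"
  unfolding chan_avg_def by (simp add: distrib_left sum.distrib)

lemma chan_avg_mono:
  assumes "stochastic_kernel W"
    and "\<And>ys1 ys2. length ys1 = n \<Longrightarrow> length ys2 = n \<Longrightarrow> f ys1 ys2 \<le> g ys1 ys2"
  shows "chan_avg W n xs f \<le> chan_avg W n xs g"
  unfolding chan_avg_def
  using assms by (intro sum_mono mult_left_mono)
    (auto simp: chan_n_def stochastic_kernel_def prod_nonneg)

lemma chan_avg_cong:
  assumes "\<And>ys1 ys2. length ys1 = n \<Longrightarrow> length ys2 = n \<Longrightarrow> f ys1 ys2 = g ys1 ys2"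
  shows "chan_avg W n xs f = chan_avg W n xs g"
  unfolding chan_avg_def using assms by (intro sum.cong refl) auto

lemma chan_avg_const:
  fixes W :: "'x \<Rightarrow> 'y1::finite \<times> 'y2::finite \<Rightarrow> real"
  assumes W: "stochastic_kernel W" and "length xs = n"
  shows "chan_avg W n xs (\<lambda>_ _. c) = c"
  using assms(2)
proof (induction n arbitrary: xs)
  case 0
  then show ?case by (simp add: chan_avg_def)
next
  case (Suc n)
  then obtain x xs' where xs: "xs = x # xs'" and "length xs' = n"
    by (cases xs) auto
  then have "chan_avg W (Suc n) xs (\<lambda>_ _. c) = (\<Sum>y1\<in>UNIV. \<Sum>y2\<in>UNIV. W x (y1, y2)) * c"
    by (simp add: chan_avg_Suc Suc.IH sum_distrib_right)
  also have "(\<Sum>y1\<in>UNIV. \<Sum>y2\<in>UNIV. W x (y1, y2)) = 1"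
    using W by (simp add: stochastic_kernel_def sum.cartesian_product flip: UNIV_Times_UNIV)
  finally show ?case by simp
qed

lemma ns_err1_eq_chan_avg:
  "ns_err1 W n m1 m2 P = 1 - (\<Sum>w1<m1. \<Sum>w2<m2. \<Sum>xs\<in>lists_n n.
     chan_avg W n xs (\<lambda>ys1 ys2. \<Sum>b<m2. P (w1, w2) ys1 ys2 xs w1 b)) / (real m1 * real m2)"
  unfolding ns_err1_def chan_avg_def by (simp add: sum_distrib_left mult.commute)

lemma ns_err2_eq_chan_avg:
  "ns_err2 W n m1 m2 P = 1 - (\<Sum>w1<m1. \<Sum>w2<m2. \<Sum>xs\<in>lists_n n.
     chan_avg W n xs (\<lambda>ys1 ys2. \<Sum>a<m1. P (w1, w2) ys1 ys2 xs a w2)) / (real m1 * real m2)"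
  unfolding ns_err2_def chan_avg_def by (simp add: sum_distrib_left mult.commute)

lemma classical_err1_eq_chan_avg:
  "classical_err1 W n m1 m2 E D1 = 1 - (\<Sum>w1<m1. \<Sum>w2<m2. \<Sum>xs\<in>lists_n n.
     E w1 w2 xs * chan_avg W n xs (\<lambda>ys1 _. D1 ys1 w1)) / (real m1 * real m2)"
  unfolding classical_err1_def chan_avg_def by (simp add: sum_distrib_left mult.assoc)

lemma classical_err2_eq_chan_avg:
  "classical_err2 W n m1 m2 E D2 = 1 - (\<Sum>w1<m1. \<Sum>w2<m2. \<Sum>xs\<in>lists_n n.
     E w1 w2 xs * chan_avg W n xs (\<lambda>_ ys2. D2 ys2 w2)) / (real m1 * real m2)"
  unfolding classical_err2_def chan_avg_def by (simp add: sum_distrib_left mult.assoc)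

lemma classical_err_deterministic_encoder:
  fixes f :: "nat \<Rightarrow> nat \<Rightarrow> 'x::finite list"
  assumes "\<And>w1 w2. w1 < m1 \<Longrightarrow> w2 < m2 \<Longrightarrow> length (f w1 w2) = n"
  shows "classical_err1 W n m1 m2 (\<lambda>w1 w2 x. of_bool (x = f w1 w2)) D1 =
           1 - (\<Sum>w1<m1. \<Sum>w2<m2. chan_avg W n (f w1 w2) (\<lambda>ys1 _. D1 ys1 w1)) / (real m1 * real m2)"
      (is ?err1)
    and "classical_err2 W n m1 m2 (\<lambda>w1 w2 x. of_bool (x = f w1 w2)) D2 =
           1 - (\<Sum>w1<m1. \<Sum>w2<m2. chan_avg W n (f w1 w2) (\<lambda>_ ys2. D2 ys2 w2)) / (real m1 * real m2)"
      (is ?err2)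
proof -
  have "(\<Sum>w1<m1. \<Sum>w2<m2. \<Sum>x\<in>lists_n n. of_bool (x = f w1 w2) * F w1 w2 x) =
      (\<Sum>w1<m1. \<Sum>w2<m2. F w1 w2 (f w1 w2))" for F :: "nat \<Rightarrow> nat \<Rightarrow> 'x list \<Rightarrow> real"
    using assms by (intro sum.cong refl) simp
  then show ?err1 ?err2
    unfolding classical_err1_eq_chan_avg classical_err2_eq_chan_avg by simp_all
qed

lemma sum_rate_le_log_of_product_bound:
  assumes r1: "rate_ge m1 R1" and r2: "rate_ge m2 R2" and B: "B > 0" and C: "C > 0"
    and m1: "\<And>n. m1 n \<ge> 1" and m2: "\<And>n. m2 n \<ge> 1"
    and bound: "\<forall>\<^sub>F n in sequentially. real (m1 n) * real (m2 n) \<le> C * B ^ n"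
  shows "R1 + R2 \<le> log 2 B"
proof (rule field_le_epsilon)
  fix \<epsilon> :: real
  assume "\<epsilon> > 0"
  then have "\<forall>\<^sub>F n in sequentially. log 2 (real (m1 n)) / real n \<ge> R1 - \<epsilon> / 3"
    and "\<forall>\<^sub>F n in sequentially. log 2 (real (m2 n)) / real n \<ge> R2 - \<epsilon> / 3"
    using r1 r2 by (simp_all add: rate_ge_def)
  moreover have "\<forall>\<^sub>F n in sequentially. log 2 C / real n < \<epsilon> / 3"
    using \<open>\<epsilon> > 0\<close> by (intro order_tendstoD(2)[OF lim_const_over_n]) simp
  moreover have "\<forall>\<^sub>F n in sequentially. n > 0"
    by simp
  ultimately have "\<forall>\<^sub>F n in sequentially. log 2 (real (m1 n)) / real n \<ge> R1 - \<epsilon> / 3 \<and>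
      log 2 (real (m2 n)) / real n \<ge> R2 - \<epsilon> / 3 \<and> log 2 C / real n < \<epsilon> / 3 \<and> n > 0 \<and>
      real (m1 n) * real (m2 n) \<le> C * B ^ n"
    using bound by eventually_elim blast
  then obtain n where n1: "log 2 (real (m1 n)) / real n \<ge> R1 - \<epsilon> / 3"
    and n2: "log 2 (real (m2 n)) / real n \<ge> R2 - \<epsilon> / 3"
    and nC: "log 2 C / real n < \<epsilon> / 3" and n: "n > 0"
    and nB: "real (m1 n) * real (m2 n) \<le> C * B ^ n"
    using eventually_happens'[OF sequentially_bot] by blast
  have "log 2 (real (m1 n)) + log 2 (real (m2 n)) = log 2 (real (m1 n) * real (m2 n))"
    using m1[of n] m2[of n] by (simp add: log_mult)
  also have "\<dots> \<le> log 2 (C * B ^ n)"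
    using m1[of n] m2[of n] nB B C by (subst log_le_cancel_iff) auto
  also have "\<dots> = log 2 C + real n * log 2 B"
    using B C by (simp add: log_mult log_nat_power)
  finally have "(log 2 (real (m1 n)) + log 2 (real (m2 n))) / real n \<le>
      (log 2 C + real n * log 2 B) / real n"
    by (intro divide_right_mono) auto
  then have "log 2 (real (m1 n)) / real n + log 2 (real (m2 n)) / real n \<le>
      log 2 C / real n + log 2 B"
    using n by (simp add: add_divide_distrib)
  then show "R1 + R2 \<le> log 2 B + \<epsilon>"
    using n1 n2 nC by linarith
qed

lemma sum_rate_le_log_of_error_bound:
  assumes r1: "rate_ge m1 R1" and r2: "rate_ge m2 R2" and B: "B > 0" and K: "K > 0"
    and m1: "\<And>n. m1 n \<ge> 1" and m2: "\<And>n. m2 n \<ge> 1"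
    and err: "(\<lambda>n. max (e1 n) (e2 n)) \<longlonglongrightarrow> 0"
    and bound: "\<And>n. real (m1 n * m2 n) * (1 - K * (e1 n + e2 n)) \<le> B ^ n"
  shows "R1 + R2 \<le> log 2 B"
proof (rule sum_rate_le_log_of_product_bound[OF r1 r2 B _ m1 m2])
  have "\<forall>\<^sub>F n in sequentially. max (e1 n) (e2 n) < 1 / (4 * K)"
    using K by (intro order_tendstoD(2)[OF err]) simp
  then show "\<forall>\<^sub>F n in sequentially. real (m1 n) * real (m2 n) \<le> 2 * B ^ n"
  proof eventually_elim
    case (elim n)
    then have "K * (e1 n + e2 n) \<le> 1 / 2"
      using K by (simp add: field_simps)
    then have "real (m1 n * m2 n) * (1 / 2) \<le> real (m1 n * m2 n) * (1 - K * (e1 n + e2 n))"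
      by (intro mult_left_mono) auto
    then show ?case
      using bound[of n] by simp
  qed
qed simp

lemma rate_ge_pow_floor:
  assumes "0 \<le> \<rho>" and "b \<ge> 1"
  shows "rate_ge (\<lambda>n. b ^ nat \<lfloor>\<rho> * real n\<rfloor>) (\<rho> * log 2 b)"
  unfolding rate_ge_def
proof (intro allI impI)
  fix \<epsilon> :: real
  assume "\<epsilon> > 0"
  have "\<forall>\<^sub>F n in sequentially. log 2 b / real n < \<epsilon>"
    using \<open>\<epsilon> > 0\<close> by (intro order_tendstoD(2)[OF lim_const_over_n]) simp
  moreover have "\<forall>\<^sub>F n in sequentially. n > 0"
    by simp
  ultimately show "\<forall>\<^sub>F n in sequentially. \<rho> * log 2 b - \<epsilon> \<le>
      log 2 (real (b ^ nat \<lfloor>\<rho> * real n\<rfloor>)) / real n"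
  proof eventually_elim
    case (elim n)
    have "\<rho> * log 2 b - log 2 b / real n = (\<rho> * real n - 1) * log 2 b / real n"
      using elim by (simp add: field_simps)
    also have "\<dots> \<le> real (nat \<lfloor>\<rho> * real n\<rfloor>) * log 2 b / real n"
      using assms by (intro divide_right_mono mult_right_mono) auto
    also have "\<dots> = log 2 (real (b ^ nat \<lfloor>\<rho> * real n\<rfloor>)) / real n"
      using assms by (simp add: log_nat_power)
    finally show ?case
      using elim by linarith
  qed
qed

lemma rate_ge_pow: "b \<ge> 1 \<Longrightarrow> rate_ge (\<lambda>n. b ^ n) (log 2 b)"
  using rate_ge_pow_floor[of 1 b] by simp

lemma is_sum_capacity_closureI:
  assumes "\<And>R. R \<in> S \<Longrightarrow> fst R + snd R \<le> c" and "R \<in> closure S" and "fst R + snd R = c"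
  shows "is_sum_capacity (closure S) c"
proof -
  have "closed {R :: real \<times> real. fst R + snd R \<le> c}"
    by (intro closed_Collect_le continuous_intros)
  then have "closure S \<subseteq> {R. fst R + snd R \<le> c}"
    using assms(1) by (intro closure_minimal) auto
  then show ?thesis
    using assms(2,3) unfolding is_sum_capacity_def by auto
qed

lemma achievable_classicalI:
  assumes "0 \<le> R1" "0 \<le> R2" "\<And>n. classical_scheme n (m1 n) (m2 n) (E n) (D1 n) (D2 n)"
    and "(\<lambda>n. max (classical_err1 W n (m1 n) (m2 n) (E n) (D1 n))
      (classical_err2 W n (m1 n) (m2 n) (E n) (D2 n)))
           \<longlonglongrightarrow> 0"
    and "rate_ge m1 R1" "rate_ge m2 R2"
  shows "achievable_classical W (R1, R2)"
  unfolding achievable_classical_def fst_conv snd_conv using assms by blast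

section \<open>The broadcast channel \<open>bc3\<close>\<close>

lemma bc3_eq:
  "bc3 x (y1, y2) = (of_bool (y1 = fst x \<and> y2 = (fst x + snd x, 1)) +
                     of_bool (y1 = fst x \<and> y2 = (snd x - fst x, -1))) / 2"
  unfolding bc3_def by simp

lemma sum_bc3_mult:
  "(\<Sum>y1\<in>UNIV. \<Sum>y2\<in>UNIV. bc3 x (y1, y2) * F y1 y2) =
   (F (fst x) (fst x + snd x, 1) + F (fst x) (snd x - fst x, -1)) / 2"
proof -
  have "(\<Sum>y1\<in>UNIV. \<Sum>y2\<in>UNIV. bc3 x (y1, y2) * F y1 y2) =
      ((\<Sum>y1\<in>UNIV. \<Sum>y2\<in>UNIV. of_bool (y1 = fst x \<and> y2 = (fst x + snd x, 1)) * F y1 y2) +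
       (\<Sum>y1\<in>UNIV. \<Sum>y2\<in>UNIV. of_bool (y1 = fst x \<and> y2 = (snd x - fst x, -1)) * F y1 y2)) / 2"
    unfolding bc3_eq by (simp only: distrib_right sum.distrib add_divide_distrib
        sum_divide_distrib times_divide_eq_left)
  then show ?thesis
    by (simp only: sum_sum_delta_mult)
qed

lemma stochastic_kernel_bc3: "stochastic_kernel bc3"
proof -
  have "(\<Sum>y\<in>UNIV. bc3 x y) = 1" for x
    using sum_bc3_mult[of x "\<lambda>_ _. 1"] by (simp add: sum.cartesian_product flip: UNIV_Times_UNIV)
  then show ?thesis
    by (auto simp: stochastic_kernel_def bc3_def sum_nonneg)
qed

lemma semi_deterministic_bc3: "semi_deterministic bc3"
  unfolding semi_deterministic_def
proof (intro disjI1 exI[of _ fst] allI)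
  fix x :: "3 \<times> 3" and y1 :: 3
  have "(\<Sum>y2\<in>UNIV. bc3 x (y1, y2)) = (\<Sum>y1'\<in>UNIV. \<Sum>y2\<in>UNIV. bc3 x (y1', y2) * of_bool (y1' = y1))"
    by (simp flip: sum_distrib_right)
  also have "\<dots> = (if y1 = fst x then 1 else 0)"
    by (subst sum_bc3_mult) auto
  finally show "(\<Sum>y2\<in>UNIV. bc3 x (y1, y2)) = (if y1 = fst x then 1 else 0)" .
qed

definition rx2_output :: "(3 \<times> 3) list \<Rightarrow> 3 list \<Rightarrow> (3 \<times> 3) list" where
  "rx2_output xs gs = map2 (\<lambda>x g. (g * fst x + snd x, g)) xs gs"

lemma rx2_output_Cons [simp]:
  "rx2_output (x # xs) (g # gs) = (g * fst x + snd x, g) # rx2_output xs gs"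
  by (simp add: rx2_output_def)

lemma length_rx2_output [simp]: "length (rx2_output xs gs) = min (length xs) (length gs)"
  by (simp add: rx2_output_def)

lemma nth_rx2_output [simp]:
  "i < length xs \<Longrightarrow> i < length gs \<Longrightarrow> rx2_output xs gs ! i =
      (gs ! i * fst (xs ! i) + snd (xs ! i), gs ! i)"
  by (simp add: rx2_output_def)

lemma chan_avg_bc3:
  "length xs = n \<Longrightarrow> chan_avg bc3 n xs f = (\<Sum>g\<in>signs n. f (map fst xs) (rx2_output xs g)) / 2 ^ n"
proof (induction n arbitrary: xs f)
  case 0
  then show ?case by (simp add: chan_avg_def lists_of_len_def rx2_output_def cong: conj_cong)
next
  case (Suc n)
  then obtain x xs' where xs: "xs = x # xs'" and "length xs' = n"
    by (cases xs) auto
  then have "chan_avg bc3 (Suc n) xs f = (\<Sum>y1\<in>UNIV. \<Sum>y2\<in>UNIV. bc3 x (y1, y2) *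
      (\<Sum>g\<in>signs n. f (y1 # map fst xs') (y2 # rx2_output xs' g))) / 2 ^ n"
    by (simp add: chan_avg_Suc Suc.IH flip: sum_divide_distrib)
  also have "\<dots> = ((\<Sum>g\<in>signs n. f (map fst xs) ((fst x + snd x, 1) # rx2_output xs' g)) +
      (\<Sum>g\<in>signs n. f (map fst xs) ((snd x - fst x, -1) # rx2_output xs' g))) / 2 / 2 ^ n"
    unfolding sum_bc3_mult xs by simp
  also have "\<dots> = (\<Sum>g\<in>signs (Suc n). f (map fst xs) (rx2_output xs g)) / 2 ^ Suc n"
    by (simp add: sum_signs_Suc xs)
  finally show ?case .
qed

lemma sign_cancel:
  fixes g a b c d :: 3
  assumes g: "g \<in> {1, -1}" and e1: "g * a + c = g * b + d" and e2: "- g * a + c = - g * b + d"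
  shows "a = b \<and> c = d"
proof -
  have "2 * g * a = (g * a + c) - (- g * a + c)"
    by (simp add: algebra_simps)
  also have "\<dots> = (g * b + d) - (- g * b + d)"
    using e1 e2 by simp
  also have "\<dots> = 2 * g * b"
    by (simp add: algebra_simps)
  finally have "(2 * g) * (2 * g) * a = (2 * g) * (2 * g) * b"
    by (simp only: mult.assoc)
  moreover have "(2 * g) * (2 * g) = 1"
    using g by auto
  ultimately show ?thesis
    using e1 by simp
qed

lemma rx2_output_pair_inj:
  assumes "g \<in> signs n"
  shows "inj_on (\<lambda>x. (rx2_output x g, rx2_output x (map uminus g))) (lists_n n)"
proof (rule inj_onI)
  fix x x' :: "(3 \<times> 3) list"
  assume x: "x \<in> lists_n n" and x': "x' \<in> lists_n n"
    and eq: "(rx2_output x g, rx2_output x (map uminus g)) =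
        (rx2_output x' g, rx2_output x' (map uminus g))"
  show "x = x'"
  proof (rule nth_equalityI)
    show "length x = length x'"
      using x x' by simp
    fix i
    assume "i < length x"
    moreover have "length g = n" "set g \<subseteq> {1, -1}"
      using assms by (simp_all add: mem_lists_of_len_iff)
    moreover have "g ! i \<in> {1, -1}"
      using calculation x nth_mem[of i g] by (metis mem_lists_n_iff subsetD)
    moreover have "rx2_output x g ! i = rx2_output x' g ! i"
      "rx2_output x (map uminus g) ! i = rx2_output x' (map uminus g) ! i"
      using eq by simp_all
    ultimately show "x ! i = x' ! i"
      using x x' sign_cancel[where g = "g ! i" and a = "fst (x ! i)" and b = "fst (x' ! i)"
          and c = "snd (x ! i)" and d = "snd (x' ! i)"]
      by (simp add: prod_eq_iff)
  qed
qed

lemma card_rx2_output_image: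
  assumes "length g = n"
  shows "card ((\<lambda>x. rx2_output x g) ` lists_n n) \<le> 3 ^ n"
proof -
  have "(\<lambda>x. rx2_output x g) ` lists_n n \<subseteq> (\<lambda>z. zip z g) ` (lists_n n :: 3 list set)"
  proof
    fix y
    assume "y \<in> (\<lambda>x. rx2_output x g) ` lists_n n"
    then obtain x :: "(3 \<times> 3) list" where "length x = n" "y = rx2_output x g"
      by auto
    moreover from this have "y = zip (map2 (\<lambda>x g. g * fst x + snd x) x g) g"
      using assms by (auto intro!: nth_equalityI)
    ultimately show "y \<in> (\<lambda>z. zip z g) ` lists_n n"
      using assms by (intro image_eqI[where x = "map2 (\<lambda>x g. g * fst x + snd x) x g"]) auto
  qed
  then have "card ((\<lambda>x. rx2_output x g) ` lists_n n) \<le>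
      card ((\<lambda>z. zip z g) ` (lists_n n :: 3 list set))"
    by (intro card_mono) auto
  also have "\<dots> \<le> 3 ^ n"
    using card_image_le[of "lists_n n :: 3 list set" "\<lambda>z. zip z g"] by (simp add: card_lists_n)
  finally show ?thesis .
qed

section \<open>The NS-assisted converse\<close>

context
  fixes n m1 m2 :: nat
    and P :: "nat \<times> nat \<Rightarrow> 'y1::finite list \<Rightarrow> 'y2::finite list \<Rightarrow> 'x::finite list \<Rightarrow> nat \<Rightarrow> nat \<Rightarrow> real"
  assumes box: "ns_box n m1 m2 P"
begin

lemma ns_box_nonneg:
  "w \<in> {..<m1} \<times> {..<m2} \<Longrightarrow> y1 \<in> lists_n n \<Longrightarrow> y2 \<in> lists_n n \<Longrightarrow> x \<in> lists_n n
   \<Longrightarrow> a < m1 \<Longrightarrow> b < m2 \<Longrightarrow> 0 \<le> P w y1 y2 x a b"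
  using box unfolding ns_box_def by blast

lemma ns_box_sum_eq_1:
  "w \<in> {..<m1} \<times> {..<m2} \<Longrightarrow> y1 \<in> lists_n n \<Longrightarrow> y2 \<in> lists_n n
   \<Longrightarrow> (\<Sum>x\<in>lists_n n. \<Sum>a<m1. \<Sum>b<m2. P w y1 y2 x a b) = 1"
  using box unfolding ns_box_def by blast

lemma ns_box_tx_marginal:
  "w \<in> {..<m1} \<times> {..<m2} \<Longrightarrow> y1 \<in> lists_n n \<Longrightarrow> y2 \<in> lists_n n
   \<Longrightarrow> y1' \<in> lists_n n \<Longrightarrow> y2' \<in> lists_n n \<Longrightarrow> x \<in> lists_n n
   \<Longrightarrow> (\<Sum>a<m1. \<Sum>b<m2. P w y1 y2 x a b) = (\<Sum>a<m1. \<Sum>b<m2. P w y1' y2' x a b)"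
  using box unfolding ns_box_def by blast

lemma ns_box_rx_marginal:
  "w \<in> {..<m1} \<times> {..<m2} \<Longrightarrow> w' \<in> {..<m1} \<times> {..<m2} \<Longrightarrow> y1 \<in> lists_n n \<Longrightarrow> y2 \<in> lists_n n
   \<Longrightarrow> a < m1 \<Longrightarrow> b < m2 \<Longrightarrow> (\<Sum>x\<in>lists_n n. P w y1 y2 x a b) = (\<Sum>x\<in>lists_n n. P w' y1 y2 x a b)"
  using box unfolding ns_box_def by blast

lemma ns_box_sum_correct_le_one:
  assumes y: "y1 \<in> lists_n n" "y2 \<in> lists_n n" and x: "x \<in> lists_n n"
  shows "(\<Sum>w1<m1. \<Sum>w2<m2. P (w1, w2) y1 y2 x w1 w2) \<le> 1"
proof -
  have w0: "(0, 0) \<in> {..<m1} \<times> {..<m2}"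
    using box by (auto simp: ns_box_def)
  have "(\<Sum>w1<m1. \<Sum>w2<m2. P (w1, w2) y1 y2 x w1 w2) \<le>
      (\<Sum>w1<m1. \<Sum>w2<m2. \<Sum>x'\<in>lists_n n. P (w1, w2) y1 y2 x' w1 w2)"
    using y x by (intro sum_mono member_le_sum ns_box_nonneg) auto
  also have "\<dots> = (\<Sum>w1<m1. \<Sum>w2<m2. \<Sum>x'\<in>lists_n n. P (0, 0) y1 y2 x' w1 w2)"
    \<comment> \<open>the receivers' joint output law does not depend on the messages\<close>
    using y w0 by (intro sum.cong refl ns_box_rx_marginal) auto
  also have "\<dots> = 1"
    using y w0 by (simp add: sum_swap3[where C = "lists_n n"] ns_box_sum_eq_1)
  finally show ?thesis .
qed

lemma ns_box_sum_chan_avg_correct_le: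
  fixes W :: "'x \<Rightarrow> 'y1 \<times> 'y2 \<Rightarrow> real"
  assumes W: "stochastic_kernel W"
  shows "(\<Sum>x\<in>lists_n n. chan_avg W n x (\<lambda>ys1 ys2. \<Sum>w1<m1. \<Sum>w2<m2. P (w1, w2) ys1 ys2 x w1 w2))
    \<le> real CARD('x) ^ n"
proof -
  have "(\<Sum>x\<in>lists_n n. chan_avg W n x (\<lambda>ys1 ys2. \<Sum>w1<m1. \<Sum>w2<m2. P (w1, w2) ys1 ys2 x w1 w2))
      \<le> (\<Sum>x\<in>(lists_n n :: 'x list set). chan_avg W n x (\<lambda>_ _. 1))"
    using W by (intro sum_mono chan_avg_mono ns_box_sum_correct_le_one) auto
  also have "\<dots> = real CARD('x) ^ n"
    by (simp add: chan_avg_const[OF W] card_lists_n)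
  finally show ?thesis .
qed

lemma ns_box_sum_chan_avg_total:
  fixes W :: "'x \<Rightarrow> 'y1 \<times> 'y2 \<Rightarrow> real"
  assumes W: "stochastic_kernel W"
  shows "(\<Sum>w1<m1. \<Sum>w2<m2. \<Sum>x\<in>lists_n n.
      chan_avg W n x (\<lambda>ys1 ys2. \<Sum>a<m1. \<Sum>b<m2. P (w1, w2) ys1 ys2 x a b))
    = real (m1 * m2)"
proof -
  obtain y1\<^sub>0 :: "'y1 list" where y1\<^sub>0: "y1\<^sub>0 \<in> lists_n n"
    using Ex_list_of_length by auto
  obtain y2\<^sub>0 :: "'y2 list" where y2\<^sub>0: "y2\<^sub>0 \<in> lists_n n"
    using Ex_list_of_length by auto
  \<comment> \<open>the transmitter's output law does not depend on the receivers' inputs\<close>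
  have "chan_avg W n x (\<lambda>ys1 ys2. \<Sum>a<m1. \<Sum>b<m2. P (w1, w2) ys1 ys2 x a b) =
      chan_avg W n x (\<lambda>_ _. \<Sum>a<m1. \<Sum>b<m2. P (w1, w2) y1\<^sub>0 y2\<^sub>0 x a b)"
    if "w1 < m1" "w2 < m2" "x \<in> lists_n n" for w1 w2 x
    using that y1\<^sub>0 y2\<^sub>0 by (intro chan_avg_cong ns_box_tx_marginal) auto
  then show ?thesis
    using y1\<^sub>0 y2\<^sub>0 by (simp add: chan_avg_const[OF W] ns_box_sum_eq_1)
qed

lemma ns_err_sum_bound:
  fixes W :: "'x \<Rightarrow> 'y1 \<times> 'y2 \<Rightarrow> real"
  assumes W: "stochastic_kernel W"
  shows "real (m1 * m2) * (1 - ns_err1 W n m1 m2 P - ns_err2 W n m1 m2 P) \<le> real CARD('x) ^ n"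
proof -
  let ?L = "lists_n n :: 'x list set"
  let ?avg = "chan_avg W n"
  define S1 where
    "S1 = (\<Sum>w1<m1. \<Sum>w2<m2. \<Sum>x\<in>?L. ?avg x (\<lambda>ys1 ys2. \<Sum>b<m2. P (w1, w2) ys1 ys2 x w1 b))"
  define S2 where
    "S2 = (\<Sum>w1<m1. \<Sum>w2<m2. \<Sum>x\<in>?L. ?avg x (\<lambda>ys1 ys2. \<Sum>a<m1. P (w1, w2) ys1 ys2 x a w2))"
  have "S1 + S2 \<le> (\<Sum>w1<m1. \<Sum>w2<m2. \<Sum>x\<in>?L. ?avg x
      (\<lambda>ys1 ys2. P (w1, w2) ys1 ys2 x w1 w2 + (\<Sum>a<m1. \<Sum>b<m2. P (w1, w2) ys1 ys2 x a b)))"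
    unfolding S1_def S2_def sum.distrib[symmetric] chan_avg_add[symmetric]
    using W by (intro sum_mono chan_avg_mono sum_row_plus_sum_col_le ns_box_nonneg) auto
  also have "\<dots> = (\<Sum>x\<in>?L. ?avg x (\<lambda>ys1 ys2. \<Sum>w1<m1. \<Sum>w2<m2. P (w1, w2) ys1 ys2 x w1 w2)) +
      (\<Sum>w1<m1. \<Sum>w2<m2. \<Sum>x\<in>?L. ?avg x (\<lambda>ys1 ys2. \<Sum>a<m1. \<Sum>b<m2. P (w1, w2) ys1 ys2 x a b))"
    by (simp only: chan_avg_add chan_avg_sum sum.distrib sum_swap3[where C = ?L])
  finally have "S1 + S2 \<le> real CARD('x) ^ n + real (m1 * m2)"
    using ns_box_sum_chan_avg_correct_le[OF W] ns_box_sum_chan_avg_total[OF W] by linarith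
  moreover have "m1 \<ge> 1" "m2 \<ge> 1"
    using box by (auto simp: ns_box_def)
  then have "real (m1 * m2) * (1 - ns_err1 W n m1 m2 P - ns_err2 W n m1 m2 P) =
      S1 + S2 - real (m1 * m2)"
    unfolding S1_def S2_def ns_err1_eq_chan_avg ns_err2_eq_chan_avg by (simp add: field_simps)
  ultimately show ?thesis
    by linarith
qed

end

lemma achievable_ns_sum_rate_le:
  fixes W :: "'x::finite \<Rightarrow> 'y1::finite \<times> 'y2::finite \<Rightarrow> real"
  assumes W: "stochastic_kernel W" and "achievable_ns W R"
  shows "fst R + snd R \<le> log 2 CARD('x)"
proof -
  obtain m1 m2 :: "nat \<Rightarrow> nat" and P where box: "\<And>n. ns_box n (m1 n) (m2 n) (P n)"
    and err: "(\<lambda>n. max (ns_err1 W n (m1 n) (m2 n) (P n)) (ns_err2 W n (m1 n) (m2 n) (P n))) \<longlonglongrightarrow> 0"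
    and r1: "rate_ge m1 (fst R)" and r2: "rate_ge m2 (snd R)"
    using assms(2) unfolding achievable_ns_def by blast
  show ?thesis
  proof (rule sum_rate_le_log_of_error_bound[where K = 1, OF r1 r2 _ _ _ _ err])
    show "real (m1 n * m2 n) * (1 - 1 * (ns_err1 W n (m1 n) (m2 n) (P n) +
        ns_err2 W n (m1 n) (m2 n) (P n)))
        \<le> real CARD('x) ^ n" for n
      using ns_err_sum_bound[OF box W] by (simp add: diff_diff_eq)
  qed (use box in \<open>auto simp: ns_box_def\<close>)
qed

section \<open>NS-assisted achievability\<close>

text \<open>The box draws a uniform pad \<open>t\<close>, sends \<open>X2 = enc w2 + t\<close>, and gives Rx-2 the index of
  \<open>G X1 + X2 - G enc w1 - t\<close>, computed from its channel output and \<open>w1\<close>. For every \<open>w\<close> and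
  channel output this value is uniform in \<open>t\<close>, which is what makes the box non-signalling.\<close>

definition pad_input :: "nat \<Rightarrow> nat \<times> nat \<Rightarrow> 3 list \<Rightarrow> (3 \<times> 3) list" where
  "pad_input n w t = zip (list_enum n (fst w)) (map2 (+) (list_enum n (snd w)) t)"

definition pad_unmask :: "nat \<Rightarrow> nat \<Rightarrow> (3 \<times> 3) list \<Rightarrow> 3 list \<Rightarrow> 3 list" where
  "pad_unmask n w1 y2 t = map2 (-) (map2 (\<lambda>y u. fst y - snd y * u) y2 (list_enum n w1)) t"

definition pad_pair_box :: "nat \<Rightarrow> nat \<times> nat \<Rightarrow> (3 \<times> 3) list \<Rightarrow> (3 \<times> 3) list \<Rightarrow> nat \<Rightarrow> real" where
  "pad_pair_box n w y2 x b = (\<Sum>t\<in>lists_n n.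
     of_bool (x = pad_input n w t) *
     of_bool (b = list_index n (pad_unmask n (fst w) y2 t))) / 3 ^ n"

definition pad_box ::
  "nat \<Rightarrow> nat \<times> nat \<Rightarrow> 3 list \<Rightarrow> (3 \<times> 3) list \<Rightarrow> (3 \<times> 3) list \<Rightarrow> nat \<Rightarrow> nat \<Rightarrow> real" where
  "pad_box n w y1 y2 x a b = of_bool (a = list_index n y1) * pad_pair_box n w y2 x b"

lemma length_pad_input [simp]: "length t = n \<Longrightarrow> length (pad_input n w t) = n"
  by (simp add: pad_input_def)

lemma map_fst_pad_input: "length t = n \<Longrightarrow> map fst (pad_input n w t) = list_enum n (fst w)"
  by (simp add: pad_input_def)

lemma length_pad_unmask [simp]: "length y2 = n \<Longrightarrow> length t = n \<Longrightarrow> length (pad_unmask n w1 y2 t) = n"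
  by (simp add: pad_unmask_def)

lemma pad_unmask_rx2_output:
  "length t = n \<Longrightarrow> length g = n \<Longrightarrow> pad_unmask n (fst w) (rx2_output (pad_input n w t) g) t =
      list_enum n (snd w)"
  by (intro nth_equalityI) (auto simp: pad_unmask_def pad_input_def)

lemma sum_pad_unmask:
  assumes "length y2 = n"
  shows "(\<Sum>t\<in>lists_n n. f (pad_unmask n w1 y2 t)) = (\<Sum>s\<in>lists_n n. f s)"
proof -
  define c where "c = map2 (\<lambda>y u. fst y - snd y * u) y2 (list_enum n w1)"
  have "pad_unmask n w1 y2 t = map2 (-) c t" for t
    by (simp add: pad_unmask_def c_def)
  moreover have "length c = n"
    using assms by (simp add: c_def)
  then have "map2 (-) c (map2 (-) c t) = t" if "length t = n" for t
    using that by (intro nth_equalityI) auto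
  ultimately show ?thesis
    using \<open>length c = n\<close> by (intro sum.reindex_bij_witness[of _ "map2 (-) c" "map2 (-) c"]) auto
qed

definition pad_tx_law :: "nat \<Rightarrow> nat \<times> nat \<Rightarrow> (3 \<times> 3) list \<Rightarrow> real" where
  "pad_tx_law n w x = (\<Sum>t\<in>lists_n n. of_bool (x = pad_input n w t)) / 3 ^ n"

lemma sum_pad_tx_law_mult:
  "(\<Sum>x\<in>lists_n n. pad_tx_law n w x * f x) = (\<Sum>t\<in>lists_n n. f (pad_input n w t)) / 3 ^ n"
proof -
  have "(\<Sum>x\<in>lists_n n. pad_tx_law n w x * f x) =
      (\<Sum>x\<in>lists_n n. \<Sum>t\<in>lists_n n. of_bool (x = pad_input n w t) * f x) / 3 ^ n"
    unfolding pad_tx_law_def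
    by (simp add: sum_divide_distrib sum_distrib_right del: sum_of_bool_eq sum_of_bool_mult_eq)
  also have "\<dots> = (\<Sum>t\<in>lists_n n. f (pad_input n w t)) / 3 ^ n"
    by (subst sum_swap_of_bool_eq) auto
  finally show ?thesis .
qed

lemma sum_pad_tx_law: "(\<Sum>x\<in>lists_n n. pad_tx_law n w x) = 1"
  using sum_pad_tx_law_mult[of n w "\<lambda>_. 1"] by (simp add: card_lists_n)

lemma pad_pair_box_sum_b:
  "length y2 = n \<Longrightarrow> (\<Sum>b<3^n. pad_pair_box n w y2 x b) = pad_tx_law n w x"
  unfolding pad_pair_box_def pad_tx_law_def sum_divide_distrib[symmetric]
    mult.commute[of "of_bool (x = _)"]
  by (intro arg_cong2[where f = "(/)"] sum_swap_of_bool_eq) (auto intro: list_index_less_3)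

lemma pad_pair_box_sum_x:
  assumes "length y2 = n"
  shows "(\<Sum>x\<in>lists_n n. pad_pair_box n w y2 x b) = of_bool (b < 3 ^ n) / 3 ^ n"
proof -
  have "(\<Sum>x\<in>lists_n n. pad_pair_box n w y2 x b) =
      (\<Sum>t\<in>lists_n n. of_bool (b = list_index n (pad_unmask n (fst w) y2 t))) / 3 ^ n"
    unfolding pad_pair_box_def sum_divide_distrib[symmetric] by (subst sum_swap_of_bool_eq) auto
  also have "\<dots> = of_bool (b < 3 ^ n) / 3 ^ n"
    using sum_of_bool_eq_list_index[where n = n and b = b and 'a = 3]
    by (simp only: sum_pad_unmask[OF assms, where f = "\<lambda>s. of_bool (b = list_index n s)"]) simp
  finally show ?thesis .
qed

lemma pad_pair_box_nonneg: "0 \<le> pad_pair_box n w y2 x b"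
  unfolding pad_pair_box_def by (simp add: sum_nonneg)

lemma ns_box_pad_box: "ns_box n (3 ^ n) (3 ^ n) (pad_box n)"
  unfolding ns_box_def pad_box_def
  by (simp add: sum_distrib_left[symmetric] pad_pair_box_nonneg list_index_less_3 pad_pair_box_sum_b
      pad_pair_box_sum_x sum_pad_tx_law)

lemma pad_box_rx1_success:
  assumes "w1 < 3 ^ n"
  shows "(\<Sum>x\<in>lists_n n. chan_avg bc3 n x (\<lambda>ys1 ys2. \<Sum>b<3^n. pad_box n (w1, w2) ys1 ys2 x w1 b)) = 1"
proof -
  have "(\<Sum>x\<in>lists_n n. chan_avg bc3 n x (\<lambda>ys1 ys2. \<Sum>b<3^n. pad_box n (w1, w2) ys1 ys2 x w1 b)) =
      (\<Sum>x\<in>lists_n n. pad_tx_law n (w1, w2) x * of_bool (w1 = list_index n (map fst x)))"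
    by (intro sum.cong refl)
      (auto simp: chan_avg_bc3 pad_box_def pad_pair_box_sum_b mem_lists_of_len_iff card_signs
        simp flip: sum_distrib_left)
  also have "\<dots> = (\<Sum>t\<in>lists_n n. of_bool (w1 = list_index n (map fst (pad_input n (w1, w2) t)))) / 3 ^ n"
    by (rule sum_pad_tx_law_mult)
  also have "\<dots> = 1"
    using assms by (simp add: map_fst_pad_input card_lists_n)
  finally show ?thesis .
qed

lemma pad_box_rx2_success:
  assumes "w2 < 3 ^ n"
  shows "(\<Sum>x\<in>lists_n n. chan_avg bc3 n x (\<lambda>ys1 ys2. \<Sum>a<3^n. pad_box n (w1, w2) ys1 ys2 x a w2)) = 1"
proof -
  have "(\<Sum>x\<in>lists_n n. chan_avg bc3 n x (\<lambda>ys1 ys2. \<Sum>a<3^n. pad_box n (w1, w2) ys1 ys2 x a w2)) =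
      (\<Sum>g\<in>signs n. \<Sum>x\<in>lists_n n. pad_pair_box n (w1, w2) (rx2_output x g) x w2) / 2 ^ n"
    by (simp add: chan_avg_bc3 pad_box_def list_index_less_3 sum.swap[of _ "signs n"]
        flip: sum_divide_distrib)
  also have "\<dots> = 1"
  proof (rule sum_signs_eq_const)
    fix g
    assume "g \<in> signs n"
    then have g: "length g = n"
      by (simp add: mem_lists_of_len_iff)
    have "(\<Sum>x\<in>lists_n n. pad_pair_box n (w1, w2) (rx2_output x g) x w2) =
        (\<Sum>t\<in>lists_n n. of_bool (w2 =
          list_index n (pad_unmask n w1 (rx2_output (pad_input n (w1, w2) t) g) t))) / 3 ^ n"
      unfolding pad_pair_box_def sum_divide_distrib[symmetric] by (subst sum_swap_of_bool_eq) auto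
    also have "\<dots> = (\<Sum>t\<in>(lists_n n :: 3 list set). 1) / 3 ^ n"
      using assms g pad_unmask_rx2_output[of _ n g "(w1, w2)"]
      by (intro arg_cong2[where f = "(/)"] sum.cong refl) auto
    also have "\<dots> = 1"
      by (simp add: card_lists_n)
    finally show "(\<Sum>x\<in>lists_n n. pad_pair_box n (w1, w2) (rx2_output x g) x w2) = 1" .
  qed
  finally show ?thesis .
qed

lemma achievable_ns_bc3: "achievable_ns bc3 (log 2 3, log 2 3)"
proof -
  have "ns_err1 bc3 n (3 ^ n) (3 ^ n) (pad_box n) = 0"
    and "ns_err2 bc3 n (3 ^ n) (3 ^ n) (pad_box n) = 0" for n
    by (simp_all add: ns_err1_eq_chan_avg ns_err2_eq_chan_avg pad_box_rx1_success
        pad_box_rx2_success)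
  then show ?thesis
    unfolding achievable_ns_def using ns_box_pad_box rate_ge_pow[of 3]
    by (intro conjI exI[of _ "\<lambda>n. 3 ^ n"] exI[of _ pad_box]) auto
qed

lemma sum_capacity_ns_bc3: "is_sum_capacity (capacity_region_ns bc3) (2 * log 2 3)"
  unfolding capacity_region_ns_def
proof (rule is_sum_capacity_closureI)
  have "log 2 (real CARD(3 \<times> 3)) = log 2 (3 ^ 2)"
    by simp
  also have "\<dots> = 2 * log 2 3"
    by (subst log_nat_power) auto
  finally show "fst R + snd R \<le> 2 * log 2 3" if "R \<in> {R. achievable_ns bc3 R}" for R
    using that achievable_ns_sum_rate_le[OF stochastic_kernel_bc3, of R] by simp
  show "(log 2 3, log 2 3) \<in> closure {R. achievable_ns bc3 R}"
    using achievable_ns_bc3 closure_subset by blast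
qed simp

section \<open>The classical converse\<close>

context
  fixes n m1 m2 :: nat and E :: "nat \<Rightarrow> nat \<Rightarrow> (3 \<times> 3) list \<Rightarrow> real"
    and D1 :: "3 list \<Rightarrow> nat \<Rightarrow> real" and D2 :: "(3 \<times> 3) list \<Rightarrow> nat \<Rightarrow> real"
  assumes sch: "classical_scheme n m1 m2 E D1 D2"
begin

lemma classical_scheme_nonneg:
  shows "w1 < m1 \<Longrightarrow> w2 < m2 \<Longrightarrow> x \<in> lists_n n \<Longrightarrow> 0 \<le> E w1 w2 x"
    and "ys \<in> lists_n n \<Longrightarrow> w < m1 \<Longrightarrow> 0 \<le> D1 ys w"
    and "ys' \<in> lists_n n \<Longrightarrow> w' < m2 \<Longrightarrow> 0 \<le> D2 ys' w'"
  using sch unfolding classical_scheme_def by blast+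

lemma classical_scheme_sum_eq_1:
  shows "w1 < m1 \<Longrightarrow> w2 < m2 \<Longrightarrow> (\<Sum>x\<in>lists_n n. E w1 w2 x) = 1"
    and "ys \<in> lists_n n \<Longrightarrow> (\<Sum>w<m1. D1 ys w) = 1"
    and "ys' \<in> lists_n n \<Longrightarrow> (\<Sum>w<m2. D2 ys' w) = 1"
  using sch unfolding classical_scheme_def by blast+

lemma classical_scheme_le_1:
  shows "w1 < m1 \<Longrightarrow> w2 < m2 \<Longrightarrow> x \<in> lists_n n \<Longrightarrow> E w1 w2 x \<le> 1"
    and "ys \<in> lists_n n \<Longrightarrow> w < m1 \<Longrightarrow> D1 ys w \<le> 1"
    and "ys' \<in> lists_n n \<Longrightarrow> w' < m2 \<Longrightarrow> D2 ys' w' \<le> 1"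
  using member_le_sum[of x "lists_n n" "E w1 w2"] member_le_sum[of w "{..<m1}" "D1 ys"]
    member_le_sum[of w' "{..<m2}" "D2 ys'"]
  by (auto simp: classical_scheme_nonneg classical_scheme_sum_eq_1)

lemma classical_scheme_sizes_ge_1: "m1 \<ge> 1" "m2 \<ge> 1"
  using sch unfolding classical_scheme_def by blast+

lemma bc3_joint_success_le_card:
  assumes w2: "w2 < m2" and g: "g \<in> signs n" "g' \<in> signs n"
  shows "(\<Sum>w1<m1. \<Sum>x\<in>lists_n n. E w1 w2 x * D1 (map fst x) w1 *
            (D2 (rx2_output x g) w2 * D2 (rx2_output x g') w2)) \<le> 3 ^ n"
proof -
  have o2: "rx2_output x h \<in> lists_n n" if "x \<in> lists_n n" "h \<in> signs n" for x h
    using that by (simp add: mem_lists_of_len_iff)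
  have "(\<Sum>w1<m1. \<Sum>x\<in>lists_n n. E w1 w2 x * D1 (map fst x) w1 *
            (D2 (rx2_output x g) w2 * D2 (rx2_output x g') w2)) \<le>
        (\<Sum>w1<m1. \<Sum>x\<in>lists_n n. E w1 w2 x * D1 (map fst x) w1)"
    using w2 g o2 by (intro sum_mono mult_right_le_one_le mult_le_one mult_nonneg_nonneg)
      (auto simp: classical_scheme_nonneg classical_scheme_le_1)
  also have "\<dots> \<le> (\<Sum>w1<m1. \<Sum>v\<in>lists_n n. D1 v w1)"
    using w2 by (intro sum_mono sum_mult_comp_le) (auto simp: classical_scheme_nonneg
        classical_scheme_sum_eq_1)
  also have "\<dots> = (\<Sum>v\<in>lists_n n. \<Sum>w1<m1. D1 v w1)"
    by (rule sum.swap)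
  also have "\<dots> = (\<Sum>v\<in>(lists_n n :: 3 list set). 1)"
    by (intro sum.cong refl) (simp add: classical_scheme_sum_eq_1)
  also have "\<dots> = 3 ^ n"
    by (simp add: card_lists_n)
  finally show ?thesis .
qed

lemma bc3_joint_success_le_product:
  assumes w2: "w2 < m2" and g: "g \<in> signs n"
  shows "(\<Sum>w1<m1. \<Sum>x\<in>lists_n n. E w1 w2 x * D1 (map fst x) w1 *
            (D2 (rx2_output x g) w2 * D2 (rx2_output x (map uminus g)) w2)) \<le>
         (\<Sum>y\<in>(\<lambda>x. rx2_output x g) ` lists_n n. D2 y w2) *
         (\<Sum>y\<in>(\<lambda>x. rx2_output x (map uminus g)) ` lists_n n. D2 y w2)"
proof -
  have o2: "rx2_output x h \<in> lists_n n" if "x \<in> lists_n n" "h \<in> signs n" for x h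
    using that by (simp add: mem_lists_of_len_iff)
  have "(\<Sum>w1<m1. \<Sum>x\<in>lists_n n. E w1 w2 x * D1 (map fst x) w1 *
            (D2 (rx2_output x g) w2 * D2 (rx2_output x (map uminus g)) w2)) =
      (\<Sum>x\<in>lists_n n. (\<Sum>w1<m1. E w1 w2 x * D1 (map fst x) w1) *
            (D2 (rx2_output x g) w2 * D2 (rx2_output x (map uminus g)) w2))"
    by (simp add: sum.swap[of _ "lists_n n"] sum_distrib_right)
  also have "\<dots> \<le> (\<Sum>x\<in>lists_n n. D2 (rx2_output x g) w2 * D2 (rx2_output x (map uminus g)) w2)"
  proof (intro sum_mono mult_left_le_one_le)
    fix x :: "(3 \<times> 3) list"
    assume x: "x \<in> lists_n n"
    have "(\<Sum>w1<m1. E w1 w2 x * D1 (map fst x) w1) \<le> (\<Sum>w1<m1. D1 (map fst x) w1)"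
      using x w2 by (intro sum_mono mult_left_le_one_le) (auto simp: classical_scheme_nonneg
          classical_scheme_le_1)
    then show "(\<Sum>w1<m1. E w1 w2 x * D1 (map fst x) w1) \<le> 1"
      using x by (simp add: classical_scheme_sum_eq_1)
    show "0 \<le> (\<Sum>w1<m1. E w1 w2 x * D1 (map fst x) w1)"
      using x w2 by (intro sum_nonneg mult_nonneg_nonneg) (auto simp: classical_scheme_nonneg)
    show "0 \<le> D2 (rx2_output x g) w2 * D2 (rx2_output x (map uminus g)) w2"
      using x w2 g o2 signs_uminus by (intro mult_nonneg_nonneg classical_scheme_nonneg) auto
  qed
  also have "\<dots> \<le> (\<Sum>y\<in>(\<lambda>x. rx2_output x g) ` lists_n n. D2 y w2) *
         (\<Sum>y\<in>(\<lambda>x. rx2_output x (map uminus g)) ` lists_n n. D2 y w2)"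
    using w2 g o2 signs_uminus
    by (intro sum_mult_le_of_inj_pair rx2_output_pair_inj) (auto intro: classical_scheme_nonneg)
  finally show ?thesis .
qed

lemma bc3_sum_decoder_image_le:
  assumes "length h = n"
  shows "(\<Sum>w2<m2. \<Sum>y\<in>(\<lambda>x. rx2_output x h) ` lists_n n. D2 y w2) \<le> 3 ^ n"
proof -
  have "(\<Sum>w2<m2. \<Sum>y\<in>(\<lambda>x. rx2_output x h) ` lists_n n. D2 y w2) =
      (\<Sum>y\<in>(\<lambda>x. rx2_output x h) ` lists_n n. 1)"
    using assms by (subst sum.swap) (intro sum.cong refl, auto simp: classical_scheme_sum_eq_1)
  also have "\<dots> \<le> 3 ^ n"
    using card_rx2_output_image[OF assms] by simp
  finally show ?thesis .
qed

lemma bc3_joint_success_le: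
  assumes g: "g \<in> signs n"
  shows "(\<Sum>w2<m2. \<Sum>w1<m1. \<Sum>x\<in>lists_n n. E w1 w2 x * D1 (map fst x) w1 *
            (D2 (rx2_output x g) w2 * D2 (rx2_output x (map uminus g)) w2)) \<le> 3 ^ n * sqrt (3 ^ n)"
proof -
  define V where "V h w2 = (\<Sum>y\<in>(\<lambda>x. rx2_output x h) ` lists_n n. D2 y w2)" for h w2
  have V: "0 \<le> V h w2" if "h \<in> signs n" "w2 < m2" for h w2
    unfolding V_def using that by (intro sum_nonneg classical_scheme_nonneg)
        (auto simp: mem_lists_of_len_iff)
  have "(\<Sum>w2<m2. \<Sum>w1<m1. \<Sum>x\<in>lists_n n. E w1 w2 x * D1 (map fst x) w1 *
            (D2 (rx2_output x g) w2 * D2 (rx2_output x (map uminus g)) w2)) \<le>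
      (\<Sum>w2<m2. sqrt (3 ^ n) * ((V g w2 + V (map uminus g) w2) / 2))"
    unfolding V_def using g signs_uminus[OF g] V[unfolded V_def]
    by (intro sum_mono le_sqrt_mult_mean bc3_joint_success_le_card bc3_joint_success_le_product
        sum_nonneg mult_nonneg_nonneg classical_scheme_nonneg)
      (auto simp: mem_lists_of_len_iff)
  also have "\<dots> = sqrt (3 ^ n) / 2 * ((\<Sum>w2<m2. V g w2) + (\<Sum>w2<m2. V (map uminus g) w2))"
    unfolding sum.distrib[symmetric] sum_distrib_left by (intro sum.cong refl) simp
  also have "\<dots> \<le> sqrt (3 ^ n) / 2 * (3 ^ n + 3 ^ n)"
    unfolding V_def using g
    by (intro mult_left_mono add_mono bc3_sum_decoder_image_le) (auto simp: mem_lists_of_len_iff)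
  finally show ?thesis
    by (simp add: mult.commute)
qed

lemma bc3_success_sum_le:
  assumes w: "w1 < m1" "w2 < m2" and x: "x \<in> lists_n n"
  shows "chan_avg bc3 n x (\<lambda>ys1 _. D1 ys1 w1) + chan_avg bc3 n x (\<lambda>_ ys2. D2 ys2 w2) \<le>
    3 / 2 + (\<Sum>g\<in>signs n. D1 (map fst x) w1 *
                (D2 (rx2_output x g) w2 * D2 (rx2_output x (map uminus g)) w2)) / (2 * 2 ^ n)"
proof -
  let ?\<alpha> = "D1 (map fst x) w1" and ?\<beta> = "\<lambda>g. D2 (rx2_output x g) w2"
  have \<alpha>: "0 \<le> ?\<alpha>" "?\<alpha> \<le> 1"
    using w x by (simp_all add: classical_scheme_nonneg classical_scheme_le_1)
  have \<beta>: "0 \<le> ?\<beta> g" "?\<beta> g \<le> 1" if "g \<in> signs n" for g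
    using w x that by (simp_all add: classical_scheme_nonneg classical_scheme_le_1
        mem_lists_of_len_iff)
  \<comment> \<open>pairing \<open>g\<close> with \<open>-g\<close> lets the cube inequality trade the two marginal successes
     for the joint success of all three decoders; this is where \<open>3 / 2\<close> comes from\<close>
  have "(\<Sum>g\<in>signs n. ?\<alpha>) + (\<Sum>g\<in>signs n. ?\<beta> g) = (\<Sum>g\<in>signs n. ?\<alpha> + (?\<beta> g + ?\<beta> (map uminus g)) / 2)"
    using sum_signs_uminus[of ?\<beta> n] by (simp add: sum.distrib sum_divide_distrib[symmetric])
  also have "\<dots> \<le> (\<Sum>g\<in>signs n. 3 / 2 + ?\<alpha> * (?\<beta> g * ?\<beta> (map uminus g)) / 2)"
    using \<alpha> \<beta> signs_uminus by (intro sum_mono order_trans[OF unit_cube_bound])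
        (auto simp: mult.assoc)
  also have "\<dots> = 3 / 2 * 2 ^ n + (\<Sum>g\<in>signs n. ?\<alpha> * (?\<beta> g * ?\<beta> (map uminus g))) / 2"
    by (simp add: sum.distrib sum_divide_distrib card_signs)
  finally have *: "(\<Sum>g\<in>signs n. ?\<alpha>) + (\<Sum>g\<in>signs n. ?\<beta> g) \<le> \<dots>" .
  have "chan_avg bc3 n x (\<lambda>ys1 _. D1 ys1 w1) + chan_avg bc3 n x (\<lambda>_ ys2. D2 ys2 w2) =
      ((\<Sum>g\<in>signs n. ?\<alpha>) + (\<Sum>g\<in>signs n. ?\<beta> g)) / 2 ^ n"
    using x by (simp add: chan_avg_bc3 add_divide_distrib)
  also have "\<dots> \<le> (3 / 2 * 2 ^ n + (\<Sum>g\<in>signs n. ?\<alpha> * (?\<beta> g * ?\<beta> (map uminus g))) / 2) / 2 ^ n"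
    using * by (intro divide_right_mono) auto
  also have "\<dots> = 3 / 2 + (\<Sum>g\<in>signs n. ?\<alpha> * (?\<beta> g * ?\<beta> (map uminus g))) / (2 * 2 ^ n)"
    by (simp add: field_simps)
  finally show ?thesis .
qed

lemma bc3_joint_success_sum_le:
  "(\<Sum>w1<m1. \<Sum>w2<m2. \<Sum>x\<in>lists_n n. E w1 w2 x * (\<Sum>g\<in>signs n. D1 (map fst x) w1 *
      (D2 (rx2_output x g) w2 * D2 (rx2_output x (map uminus g)) w2))) \<le> 2 ^ n * (3 * sqrt 3) ^ n"
proof -
  have "(\<Sum>w1<m1. \<Sum>w2<m2. \<Sum>x\<in>lists_n n. E w1 w2 x * (\<Sum>g\<in>signs n. D1 (map fst x) w1 *
      (D2 (rx2_output x g) w2 * D2 (rx2_output x (map uminus g)) w2))) =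
      (\<Sum>w1<m1. \<Sum>w2<m2. \<Sum>g\<in>signs n. \<Sum>x\<in>lists_n n. E w1 w2 x * D1 (map fst x) w1 *
         (D2 (rx2_output x g) w2 * D2 (rx2_output x (map uminus g)) w2))"
    unfolding sum_distrib_left by (intro sum.cong refl) (rule trans[OF sum.swap], simp only:
        mult.assoc)
  also have "\<dots> = (\<Sum>g\<in>signs n. \<Sum>w1<m1. \<Sum>w2<m2. \<Sum>x\<in>lists_n n. E w1 w2 x * D1 (map fst x) w1 *
         (D2 (rx2_output x g) w2 * D2 (rx2_output x (map uminus g)) w2))"
    by (rule sum_swap3)
  also have "\<dots> \<le> (\<Sum>g\<in>signs n. 3 ^ n * sqrt (3 ^ n))"
    by (intro sum_mono) (subst sum.swap, rule bc3_joint_success_le)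
  also have "\<dots> = 2 ^ n * (3 * sqrt 3) ^ n"
    by (simp add: card_signs power_mult_distrib real_sqrt_power)
  finally show ?thesis .
qed

lemma bc3_classical_err_sum_bound:
  "real (m1 * m2) * (1 - 2 * (classical_err1 bc3 n m1 m2 E D1 + classical_err2 bc3 n m1 m2 E D2))
     \<le> (3 * sqrt 3) ^ n"
proof -
  let ?L = "lists_n n :: (3 \<times> 3) list set"
  define Q where "Q w1 w2 x = (\<Sum>g\<in>signs n. D1 (map fst x) w1 *
      (D2 (rx2_output x g) w2 * D2 (rx2_output x (map uminus g)) w2))" for w1 w2 x
  define S1 where "S1 = (\<Sum>w1<m1. \<Sum>w2<m2. \<Sum>x\<in>?L. E w1 w2 x * chan_avg bc3 n x (\<lambda>ys1 _. D1 ys1 w1))"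
  define S2 where "S2 = (\<Sum>w1<m1. \<Sum>w2<m2. \<Sum>x\<in>?L. E w1 w2 x * chan_avg bc3 n x (\<lambda>_ ys2. D2 ys2 w2))"
  define X where "X = (\<Sum>w1<m1. \<Sum>w2<m2. \<Sum>x\<in>?L. E w1 w2 x * Q w1 w2 x)"
  define M where "M = real m1 * real m2"
  have "S1 + S2 \<le> (\<Sum>w1<m1. \<Sum>w2<m2. \<Sum>x\<in>?L. E w1 w2 x * (3 / 2 + Q w1 w2 x / (2 * 2 ^ n)))"
    unfolding S1_def S2_def Q_def sum.distrib[symmetric] distrib_left[symmetric]
    by (intro sum_mono mult_left_mono bc3_success_sum_le) (auto simp: classical_scheme_nonneg)
  also have "\<dots> = 3 / 2 * (\<Sum>w1<m1. \<Sum>w2<m2. \<Sum>x\<in>?L. E w1 w2 x) + X / (2 * 2 ^ n)"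
    unfolding X_def by (simp add: distrib_left sum.distrib sum_distrib_left sum_divide_distrib
        mult.commute)
  also have "(\<Sum>w1<m1. \<Sum>w2<m2. \<Sum>x\<in>?L. E w1 w2 x) = M"
    by (simp add: M_def classical_scheme_sum_eq_1)
  finally have "S1 + S2 \<le> 3 / 2 * M + X / (2 * 2 ^ n)" .
  moreover have "X / (2 * 2 ^ n) \<le> (3 * sqrt 3) ^ n / 2"
    using bc3_joint_success_sum_le unfolding X_def Q_def
    by (simp add: pos_divide_le_eq mult.commute)
  ultimately have "2 * S1 + 2 * S2 - 3 * M \<le> (3 * sqrt 3) ^ n"
    by linarith
  moreover have "M > 0"
    using classical_scheme_sizes_ge_1 by (simp add: M_def)
  then have "real (m1 * m2) * (1 - 2 * (classical_err1 bc3 n m1 m2 E D1 +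
      classical_err2 bc3 n m1 m2 E D2)) =
      2 * S1 + 2 * S2 - 3 * M"
    unfolding classical_err1_eq_chan_avg classical_err2_eq_chan_avg S1_def S2_def M_def
    by (simp add: field_simps)
  ultimately show ?thesis
    by simp
qed

end

lemma achievable_classical_bc3_sum_rate_le:
  assumes "achievable_classical bc3 R"
  shows "fst R + snd R \<le> 3 / 2 * log 2 3"
proof -
  obtain m1 m2 :: "nat \<Rightarrow> nat" and E D1 D2
    where sch: "\<And>n. classical_scheme n (m1 n) (m2 n) (E n) (D1 n) (D2 n)"
    and err: "(\<lambda>n. max (classical_err1 bc3 n (m1 n) (m2 n) (E n) (D1 n))
                    (classical_err2 bc3 n (m1 n) (m2 n) (E n) (D2 n))) \<longlonglongrightarrow> 0"
    and r1: "rate_ge m1 (fst R)" and r2: "rate_ge m2 (snd R)"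
    using assms unfolding achievable_classical_def by blast
  have "fst R + snd R \<le> log 2 (3 * sqrt 3)"
    by (rule sum_rate_le_log_of_error_bound[where K = 2,
          OF r1 r2 _ _ _ _ err bc3_classical_err_sum_bound[OF sch]])
      (use sch in \<open>auto simp: classical_scheme_def\<close>)
  also have "log 2 (3 * sqrt 3) = log 2 3 + log 2 (3 powr (1 / 2))"
    by (simp add: log_mult powr_half_sqrt)
  also have "\<dots> = 3 / 2 * log 2 3"
    by (simp add: log_powr)
  finally show ?thesis .
qed

section \<open>Classical achievability\<close>

definition agree_on_ones :: "3 list \<Rightarrow> 3 list \<Rightarrow> 3 list \<Rightarrow> bool" where
  "agree_on_ones g u v \<longleftrightarrow> (\<forall>i<length g. g ! i = 1 \<longrightarrow> u ! i = v ! i)"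

lemma agree_on_ones_Cons [simp]:
  "agree_on_ones (a # g) (b # u) (c # v) \<longleftrightarrow> (a = 1 \<longrightarrow> b = c) \<and> agree_on_ones g u v"
  unfolding agree_on_ones_def by (auto simp: nth_Cons split: nat.splits)

lemma sum_agree_on_ones:
  "length g = n \<Longrightarrow> length u = n \<Longrightarrow>
     (\<Sum>v\<in>lists_n n. of_bool (agree_on_ones g u v)) = (3 ^ n / 3 ^ count_list g 1 :: real)"
proof (induction n arbitrary: g u)
  case 0
  then show ?case by (simp add: agree_on_ones_def)
next
  case (Suc n)
  then obtain a g' b u'
    where g: "g = a # g'" and u: "u = b # u'" and "length g' = n" "length u' = n"
    by (metis length_Suc_conv)
  then have "(\<Sum>v\<in>lists_n (Suc n). of_bool (agree_on_ones g u v)) =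
      (\<Sum>c\<in>UNIV. of_bool (a = 1 \<longrightarrow> b = c) * (\<Sum>v\<in>lists_n n. of_bool (agree_on_ones g' u' v)) :: real)"
    by (simp only: g u sum_lists_n_Suc agree_on_ones_Cons of_bool_conj sum_distrib_left)
  also have "\<dots> = (\<Sum>c\<in>UNIV. of_bool (a = 1 \<longrightarrow> b = c)) * (3 ^ n / 3 ^ count_list g' 1 :: real)"
    by (simp only: Suc.IH \<open>length g' = n\<close> \<open>length u' = n\<close> sum_distrib_right)
  also have "(\<Sum>c\<in>UNIV. of_bool (a = 1 \<longrightarrow> b = c)) = (if a = 1 then 1 else 3 :: real)"
    by (cases "a = 1") (simp_all add: eq_commute[of b])
  finally show ?case
    by (simp add: g)
qed

lemma sum_signs_count_deviation:
  "(\<Sum>g\<in>signs n. (2 * real (count_list g 1) - real n)\<^sup>2) = real n * 2 ^ n"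
proof (induction n)
  case 0
  then show ?case by (simp add: lists_of_len_def cong: conj_cong)
next
  case (Suc n)
  have "(\<Sum>g\<in>signs (Suc n). (2 * real (count_list g 1) - real (Suc n))\<^sup>2) =
      (\<Sum>g\<in>signs n. (2 * real (count_list g 1) - real n + 1)\<^sup>2 +
          (2 * real (count_list g 1) - real n - 1)\<^sup>2)"
    by (simp add: sum_signs_Suc sum.distrib algebra_simps)
  also have "\<dots> = (\<Sum>g\<in>signs n. 2 * (2 * real (count_list g 1) - real n)\<^sup>2 + 2)"
    by (simp add: power2_eq_square algebra_simps)
  also have "\<dots> = real (Suc n) * 2 ^ Suc n"
    by (simp add: sum.distrib Suc.IH card_signs algebra_simps flip: sum_distrib_left)
  finally show ?case .
qed

lemma card_signs_few_ones:
  assumes "2 * k \<le> n"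
  shows "real (card {g \<in> signs n. count_list g 1 < k}) * (real n - 2 * real k)\<^sup>2 \<le> real n * 2 ^ n"
proof -
  have "real (card {g \<in> signs n. count_list g 1 < k}) * (real n - 2 * real k)\<^sup>2 =
      (\<Sum>g\<in>{g \<in> signs n. count_list g 1 < k}. (real n - 2 * real k)\<^sup>2)"
    by simp
  also have "\<dots> \<le> (\<Sum>g\<in>{g \<in> signs n. count_list g 1 < k}. (2 * real (count_list g 1) - real n)\<^sup>2)"
    using assms by (intro sum_mono) (auto simp: power2_commute[of "2 * _"] intro!: power_mono)
  also have "\<dots> \<le> (\<Sum>g\<in>signs n. (2 * real (count_list g 1) - real n)\<^sup>2)"
    by (intro sum_mono2) auto
  finally show ?thesis
    by (simp add: sum_signs_count_deviation)
qed

text \<open>With \<open>X2 = c w2 - X1\<close>, Rx-2 reads the codeword \<open>c w2\<close> itself at the positions where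
  \<open>G = 1\<close>; it decodes to the least message whose codeword is consistent there.\<close>

definition code_input :: "nat \<Rightarrow> (nat \<Rightarrow> 3 list) \<Rightarrow> nat \<Rightarrow> nat \<Rightarrow> (3 \<times> 3) list" where
  "code_input n c w1 w2 = zip (list_enum n w1) (map2 (-) (c w2) (list_enum n w1))"

definition consistent :: "3 list \<Rightarrow> (3 \<times> 3) list \<Rightarrow> bool" where
  "consistent v ys \<longleftrightarrow> (\<forall>i<length ys. snd (ys ! i) = 1 \<longrightarrow> fst (ys ! i) = v ! i)"

definition code_decode :: "nat \<Rightarrow> (nat \<Rightarrow> 3 list) \<Rightarrow> (3 \<times> 3) list \<Rightarrow> nat" where
  "code_decode K c ys = (if \<exists>w<K. consistent (c w) ys then LEAST w. w < K \<and> consistent (c w) ys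
      else 0)"

lemma code_decode_less: "K \<ge> 1 \<Longrightarrow> code_decode K c ys < K"
  unfolding code_decode_def by (auto intro: LeastI2_wellorder)

lemma length_code_input [simp]: "length (c w2) = n \<Longrightarrow> length (code_input n c w1 w2) = n"
  by (simp add: code_input_def)

lemma map_fst_code_input: "length (c w2) = n \<Longrightarrow> map fst (code_input n c w1 w2) = list_enum n w1"
  by (simp add: code_input_def)

lemma consistent_rx2_output_code_input:
  assumes "length (c w2) = n" "g \<in> signs n"
  shows "consistent v (rx2_output (code_input n c w1 w2) g) \<longleftrightarrow> agree_on_ones g v (c w2)"
  using assms by (auto simp: consistent_def agree_on_ones_def code_input_def mem_lists_of_len_iff)

text \<open>Union bound on a decoding failure: too few positions with \<open>G = 1\<close>, or some other codeword
  agreeing with \<open>c w2\<close> on all of them.\<close>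

definition fail_bound :: "nat \<Rightarrow> nat \<Rightarrow> (nat \<Rightarrow> 3 list) \<Rightarrow> nat \<Rightarrow> 3 list \<Rightarrow> real" where
  "fail_bound k K c w2 g = of_bool (count_list g 1 < k) +
     of_bool (k \<le> count_list g 1) * (\<Sum>w\<in>{..<K} - {w2}. of_bool (agree_on_ones g (c w) (c w2)))"

lemma code_decode_failure_le:
  assumes w2: "w2 < K" and c: "length (c w2) = n" and g: "g \<in> signs n"
  shows "1 - of_bool (w2 = code_decode K c (rx2_output (code_input n c w1 w2) g)) \<le>
      fail_bound k K c w2 g"
proof (cases "w2 = code_decode K c (rx2_output (code_input n c w1 w2) g)")
  case True
  then show ?thesis
    by (simp add: fail_bound_def sum_nonneg)
next
  case False
  let ?P = "\<lambda>w. w < K \<and> agree_on_ones g (c w) (c w2)"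
  have "?P w2"
    using w2 by (simp add: agree_on_ones_def)
  then have "code_decode K c (rx2_output (code_input n c w1 w2) g) = (LEAST w. ?P w)"
    using assms by (auto simp: code_decode_def consistent_rx2_output_code_input)
  moreover have "?P (LEAST w. ?P w)"
    using \<open>?P w2\<close> by (rule LeastI)
  ultimately have "?P (LEAST w. ?P w)" "(LEAST w. ?P w) \<noteq> w2"
    using False by auto
  then have "1 \<le> (\<Sum>w\<in>{..<K} - {w2}. of_bool (agree_on_ones g (c w) (c w2)) :: real)"
    using member_le_sum[of "LEAST w. ?P w" "{..<K} - {w2}"
        "\<lambda>w. of_bool (agree_on_ones g (c w) (c w2)) :: real"]
    by auto
  then show ?thesis
    using False by (simp add: fail_bound_def)
qed

abbreviation code_enc :: "nat \<Rightarrow> (nat \<Rightarrow> 3 list) \<Rightarrow> nat \<Rightarrow> nat \<Rightarrow> (3 \<times> 3) list \<Rightarrow> real" where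
  "code_enc n c \<equiv> \<lambda>w1 w2 x. of_bool (x = code_input n c w1 w2)"

abbreviation code_dec1 :: "nat \<Rightarrow> 3 list \<Rightarrow> nat \<Rightarrow> real" where
  "code_dec1 n \<equiv> \<lambda>ys w. of_bool (w = list_index n ys)"

abbreviation code_dec2 :: "nat \<Rightarrow> (nat \<Rightarrow> 3 list) \<Rightarrow> (3 \<times> 3) list \<Rightarrow> nat \<Rightarrow> real" where
  "code_dec2 K c \<equiv> \<lambda>ys w. of_bool (w = code_decode K c ys)"

context
  fixes n K :: nat and c :: "nat \<Rightarrow> 3 list"
  assumes K: "K \<ge> 1" and c: "\<And>w. w < K \<Longrightarrow> length (c w) = n"
begin

lemma code_scheme:
  "classical_scheme n (3 ^ n) K (code_enc n c) (code_dec1 n) (code_dec2 K c)"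
  unfolding classical_scheme_def using K c
  by (auto simp: code_decode_less Int_insert_right intro: list_index_less_3)

lemma code_err1: "classical_err1 bc3 n (3 ^ n) K (code_enc n c) (code_dec1 n) = 0"
  using K c by (simp add: classical_err_deterministic_encoder chan_avg_bc3 map_fst_code_input
      card_signs)

lemma code_err2_eq:
  "classical_err2 bc3 n (3 ^ n) K (code_enc n c) (code_dec2 K c) =
   (\<Sum>w1<3 ^ n. \<Sum>w2<K. \<Sum>g\<in>signs n.
     1 - of_bool (w2 = code_decode K c (rx2_output (code_input n c w1 w2) g)))
     / (3 ^ n * real K * 2 ^ n)"
  using K c by (simp add: classical_err_deterministic_encoder chan_avg_bc3 sum_subtractf
      card_signs field_simps
      flip: sum_divide_distrib)

lemma code_err2_nonneg:
  "0 \<le> classical_err2 bc3 n (3 ^ n) K (code_enc n c) (code_dec2 K c)"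
  unfolding code_err2_eq by (intro divide_nonneg_nonneg sum_nonneg) auto

lemma code_err2_le:
  "classical_err2 bc3 n (3 ^ n) K (code_enc n c) (code_dec2 K c) \<le>
      (\<Sum>w2<K. \<Sum>g\<in>signs n. fail_bound k K c w2 g) / (real K * 2 ^ n)"
proof -
  have "1 - of_bool (w2 = code_decode K c (rx2_output (code_input n c w1 w2) g)) \<le>
      fail_bound k K c w2 g"
    if "w2 < K" "g \<in> signs n" for w1 w2 g
    using that c by (intro code_decode_failure_le) auto
  then have "classical_err2 bc3 n (3 ^ n) K (code_enc n c) (code_dec2 K c) \<le>
      (\<Sum>w1<(3::nat) ^ n. \<Sum>w2<K. \<Sum>g\<in>signs n. fail_bound k K c w2 g) / (3 ^ n * real K * 2 ^ n)"
    unfolding code_err2_eq by (intro divide_right_mono sum_mono) auto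
  then show ?thesis
    by simp
qed

end

abbreviation codebooks :: "nat \<Rightarrow> nat \<Rightarrow> (nat \<Rightarrow> 3 list) set" where
  "codebooks n K \<equiv> PiE {..<K} (\<lambda>_. lists_n n)"

lemma card_codebooks: "card (codebooks n K) = (3 ^ n) ^ K"
  by (simp add: card_PiE card_lists_n)

lemma sum_codebooks_agree_on_ones:
  assumes "length g = n" and "a < K" "b < K" "a \<noteq> b"
  shows "(\<Sum>c\<in>codebooks n K. of_bool (agree_on_ones g (c a) (c b))) =
      real (card (codebooks n K)) / 3 ^ count_list g 1"
proof -
  have "K = (K - 2) + 2"
    using assms by linarith
  then have "((3::real) ^ n) ^ K = (3 ^ n) ^ (K - 2) * 3 ^ n * 3 ^ n"
    by (metis power_add power2_eq_square mult.assoc)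
  moreover have "(\<Sum>c\<in>codebooks n K. of_bool (agree_on_ones g (c a) (c b))) =
      real (card (lists_n n :: 3 list set)) ^ (card {..<K} - 2) *
        (\<Sum>u\<in>lists_n n. \<Sum>v\<in>lists_n n. of_bool (agree_on_ones g u v))"
    using assms by (intro sum_PiE_pair) auto
  moreover have "(\<Sum>u\<in>lists_n n. \<Sum>v\<in>lists_n n. of_bool (agree_on_ones g u v)) =
      (\<Sum>u\<in>(lists_n n :: 3 list set). 3 ^ n / 3 ^ count_list g 1 :: real)"
    using assms by (intro sum.cong refl sum_agree_on_ones) auto
  ultimately show ?thesis
    by (simp add: card_codebooks card_lists_n)
qed

lemma sum_codebooks_fail_bound:
  assumes g: "g \<in> signs n" and w2: "w2 < K"
  shows "(\<Sum>c\<in>codebooks n K. fail_bound k K c w2 g) \<le>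
    real (card (codebooks n K)) * (of_bool (count_list g 1 < k) + real K / 3 ^ k)"
proof -
  let ?C = "real (card (codebooks n K))"
  have len: "length g = n"
    using g by (simp add: mem_lists_of_len_iff)
  have "(\<Sum>c\<in>codebooks n K. fail_bound k K c w2 g) = ?C * of_bool (count_list g 1 < k) +
      of_bool (k \<le> count_list g 1) *
        (\<Sum>w\<in>{..<K} - {w2}. \<Sum>c\<in>codebooks n K. of_bool (agree_on_ones g (c w) (c w2)))"
    unfolding fail_bound_def
    by (simp add: sum.distrib sum.swap[of _ "codebooks n K"] flip: sum_distrib_left)
  also have "(\<Sum>w\<in>{..<K} - {w2}. \<Sum>c\<in>codebooks n K. of_bool (agree_on_ones g (c w) (c w2))) =
      real (card ({..<K} - {w2})) * (?C / 3 ^ count_list g 1)"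
    using len w2 by (simp add: sum_codebooks_agree_on_ones)
  also have "of_bool (k \<le> count_list g 1) * (real (card ({..<K} - {w2})) *
      (?C / 3 ^ count_list g 1)) \<le>
      ?C * (real K / 3 ^ k)"
  proof (cases "k \<le> count_list g 1")
    case True
    have "real (card ({..<K} - {w2})) \<le> real K"
      using card_Diff1_le[of "{..<K}" w2] by simp
    moreover have "?C / 3 ^ count_list g 1 \<le> ?C / 3 ^ k"
      using True by (intro divide_left_mono power_increasing) auto
    ultimately have "real (card ({..<K} - {w2})) * (?C / 3 ^ count_list g 1) \<le>
        real K * (?C / 3 ^ k)"
      by (intro mult_mono) auto
    then show ?thesis
      using True by (simp add: mult.commute)
  qed simp
  finally show ?thesis
    by (simp add: algebra_simps)
qed

lemma exists_good_codebook:
  "\<exists>c\<in>codebooks n K. (\<Sum>w2<K. \<Sum>g\<in>signs n. fail_bound k K c w2 g) \<le>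
      real K * (real (card {g \<in> signs n. count_list g 1 < k}) + 2 ^ n * real K / 3 ^ k)"
proof (rule ccontr)
  let ?B = "real K * (real (card {g \<in> signs n. count_list g 1 < k}) + 2 ^ n * real K / 3 ^ k)"
  assume "\<not> ?thesis"
  then have "(\<Sum>c\<in>codebooks n K. ?B) < (\<Sum>c\<in>codebooks n K. \<Sum>w2<K. \<Sum>g\<in>signs n. fail_bound k K c w2 g)"
    using Ex_list_of_length[of n] by (intro sum_strict_mono finite_PiE)
        (auto simp: PiE_eq_empty_iff)
  also have "\<dots> = (\<Sum>w2<K. \<Sum>g\<in>signs n. \<Sum>c\<in>codebooks n K. fail_bound k K c w2 g)"
    by (rule sum_swap3[symmetric])
  also have "\<dots> \<le> (\<Sum>w2<K. \<Sum>g\<in>signs n. real (card (codebooks n K)) * (of_bool (count_list g 1 < k) +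
      real K / 3 ^ k))"
    by (intro sum_mono sum_codebooks_fail_bound) auto
  also have "\<dots> = real (card (codebooks n K)) * ?B"
    by (simp add: sum.distrib card_signs Int_def conj_commute flip: sum_distrib_left)
  finally show False
    by simp
qed

lemma card_few_ones_fraction:
  assumes "0 \<le> \<sigma>" "\<sigma> < 1 / 2" "n \<ge> 1"
  shows "real (card {g \<in> signs n. count_list g 1 < nat \<lfloor>\<sigma> * real n\<rfloor>}) / 2 ^ n \<le>
      1 / ((1 - 2 * \<sigma>)\<^sup>2 * real n)"
proof -
  let ?k = "nat \<lfloor>\<sigma> * real n\<rfloor>"
  have k: "real ?k \<le> \<sigma> * real n"
    using assms by simp
  have pos: "0 < (1 - 2 * \<sigma>) * real n"
    using assms by (intro mult_pos_pos) auto
  also have "\<dots> \<le> real n - 2 * real ?k"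
    using k by (simp add: algebra_simps)
  finally have d: "0 < (real n - 2 * real ?k)\<^sup>2" "2 * ?k \<le> n"
    by simp_all
  then have "real (card {g \<in> signs n. count_list g 1 < ?k}) / 2 ^ n \<le>
      real n / (real n - 2 * real ?k)\<^sup>2"
    using card_signs_few_ones[of ?k n] by (simp add: field_simps)
  also have "\<dots> \<le> real n / ((1 - 2 * \<sigma>) * real n)\<^sup>2"
    using assms pos k d by (intro divide_left_mono power_mono mult_pos_pos)
        (auto simp: algebra_simps)
  also have "\<dots> = 1 / ((1 - 2 * \<sigma>)\<^sup>2 * real n)"
    using assms by (simp add: power2_eq_square)
  finally show ?thesis .
qed

lemma pow_floor_ratio_le:
  assumes "0 \<le> \<rho>" "\<rho> \<le> \<sigma>"
  shows "(3::real) ^ nat \<lfloor>\<rho> * real n\<rfloor> / 3 ^ nat \<lfloor>\<sigma> * real n\<rfloor> \<le> 3 * (3 powr (\<rho> - \<sigma>)) ^ n"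
proof -
  have "(3::real) ^ nat \<lfloor>\<rho> * real n\<rfloor> / 3 ^ nat \<lfloor>\<sigma> * real n\<rfloor> =
      3 powr (real (nat \<lfloor>\<rho> * real n\<rfloor>) - real (nat \<lfloor>\<sigma> * real n\<rfloor>))"
    by (simp add: powr_diff powr_realpow)
  also have "\<dots> \<le> 3 powr ((\<rho> - \<sigma>) * real n + 1)"
  proof (intro powr_mono)
    have "real (nat \<lfloor>\<rho> * real n\<rfloor>) \<le> \<rho> * real n" "\<sigma> * real n < real (nat \<lfloor>\<sigma> * real n\<rfloor>) + 1"
      using assms by simp_all
    then show "real (nat \<lfloor>\<rho> * real n\<rfloor>) - real (nat \<lfloor>\<sigma> * real n\<rfloor>) \<le> (\<rho> - \<sigma>) * real n + 1"
      by (simp add: algebra_simps)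
  qed simp
  also have "\<dots> = 3 * (3 powr (\<rho> - \<sigma>)) ^ n"
    by (simp add: powr_add powr_powr powr_realpow[symmetric] mult.commute)
  finally show ?thesis .
qed

lemma exists_codebook_err2_le:
  assumes K: "K \<ge> 1"
  shows "\<exists>c\<in>codebooks n K. classical_err2 bc3 n (3 ^ n) K (code_enc n c) (code_dec2 K c) \<le>
    real (card {g \<in> signs n. count_list g 1 < k}) / 2 ^ n + real K / 3 ^ k"
proof -
  obtain c where c: "c \<in> codebooks n K" and fail: "(\<Sum>w2<K. \<Sum>g\<in>signs n. fail_bound k K c w2 g) \<le>
      real K * (real (card {g \<in> signs n. count_list g 1 < k}) + 2 ^ n * real K / 3 ^ k)"
    using exists_good_codebook by blast
  have "\<And>w. w < K \<Longrightarrow> length (c w) = n"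
    using c by (auto simp: PiE_iff)
  with K have "classical_err2 bc3 n (3 ^ n) K (code_enc n c) (code_dec2 K c) \<le>
      (\<Sum>w2<K. \<Sum>g\<in>signs n. fail_bound k K c w2 g) / (real K * 2 ^ n)"
    by (rule code_err2_le)
  also have "\<dots> \<le> real K * (real (card {g \<in> signs n. count_list g 1 < k}) +
      2 ^ n * real K / 3 ^ k) / (real K * 2 ^ n)"
    by (rule divide_right_mono[OF fail]) simp
  also have "\<dots> = real (card {g \<in> signs n. count_list g 1 < k}) / 2 ^ n + real K / 3 ^ k"
    using K by (simp add: field_simps)
  finally show ?thesis
    using c by blast
qed

lemma achievable_classical_of_codebooks:
  assumes K: "\<And>n. K n \<ge> 1" and cb: "\<And>n. cb n \<in> codebooks n (K n)"
    and err2: "\<And>n. n \<ge> 1 \<Longrightarrow>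
      classical_err2 bc3 n (3 ^ n) (K n) (code_enc n (cb n)) (code_dec2 (K n) (cb n)) \<le> u n"
    and u: "u \<longlonglongrightarrow> 0" and R: "0 \<le> R" "rate_ge K R"
  shows "achievable_classical bc3 (log 2 3, R)"
proof -
  have len: "length (cb n w) = n" if "w < K n" for n w
    using cb[of n] that by (auto simp: PiE_iff)
  have "(\<lambda>n. classical_err2 bc3 n (3 ^ n) (K n) (code_enc n (cb n)) (code_dec2 (K n) (cb n))) \<longlonglongrightarrow> 0"
  proof (rule tendsto_sandwich[OF _ _ tendsto_const u])
    show "\<forall>\<^sub>F n in sequentially. 0 \<le> classical_err2 bc3 n (3 ^ n) (K n) (code_enc n (cb n))
        (code_dec2 (K n) (cb n))"
      using K len by (intro always_eventually allI code_err2_nonneg)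
    show "\<forall>\<^sub>F n in sequentially. classical_err2 bc3 n (3 ^ n) (K n) (code_enc n (cb n))
        (code_dec2 (K n) (cb n)) \<le> u n"
      using err2 by (auto simp: eventually_sequentially)
  qed
  moreover have "classical_err1 bc3 n (3 ^ n) (K n) (code_enc n (cb n)) (code_dec1 n) = 0" for n
    using K len by (rule code_err1)
  ultimately have "(\<lambda>n. max (classical_err1 bc3 n (3 ^ n) (K n) (code_enc n (cb n)) (code_dec1 n))
      (classical_err2 bc3 n (3 ^ n) (K n) (code_enc n (cb n)) (code_dec2 (K n) (cb n)))) \<longlonglongrightarrow> 0"
    using tendsto_max[OF tendsto_const, of _ 0 sequentially 0] by simp
  moreover have
    "classical_scheme n (3 ^ n) (K n) (code_enc n (cb n)) (code_dec1 n) (code_dec2 (K n) (cb n))" for n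
    using K len by (rule code_scheme)
  ultimately show ?thesis
    using R rate_ge_pow[of 3] by (intro achievable_classicalI) auto
qed

lemma achievable_classical_bc3:
  assumes \<rho>: "0 \<le> \<rho>" "\<rho> < 1 / 2"
  shows "achievable_classical bc3 (log 2 3, \<rho> * log 2 3)"
proof -
  define \<sigma> where "\<sigma> = (\<rho> + 1 / 2) / 2"
  have \<sigma>: "0 \<le> \<sigma>" "\<sigma> < 1 / 2" "\<rho> < \<sigma>"
    using \<rho> by (auto simp: \<sigma>_def)
  define K where "K n = (3::nat) ^ nat \<lfloor>\<rho> * real n\<rfloor>" for n
  define k where "k n = nat \<lfloor>\<sigma> * real n\<rfloor>" for n
  define q where "q = (3::real) powr (\<rho> - \<sigma>)"
  have K: "K n \<ge> 1" for n
    by (simp add: K_def)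
  have "\<exists>c. c \<in> codebooks n (K n) \<and>
      classical_err2 bc3 n (3 ^ n) (K n) (code_enc n c) (code_dec2 (K n) c) \<le>
      real (card {g \<in> signs n. count_list g 1 < k n}) / 2 ^ n + real (K n) / 3 ^ k n" for n
    using exists_codebook_err2_le[where K = "K n" and n = n and k = "k n"] K by blast
  from choice[OF allI[OF this]] obtain cb where "\<forall>n. cb n \<in> codebooks n (K n) \<and>
      classical_err2 bc3 n (3 ^ n) (K n) (code_enc n (cb n)) (code_dec2 (K n) (cb n)) \<le>
      real (card {g \<in> signs n. count_list g 1 < k n}) / 2 ^ n + real (K n) / 3 ^ k n" ..
  then have cb: "\<And>n. cb n \<in> codebooks n (K n)" and err2: "\<And>n.
      classical_err2 bc3 n (3 ^ n) (K n) (code_enc n (cb n)) (code_dec2 (K n) (cb n)) \<le>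
      real (card {g \<in> signs n. count_list g 1 < k n}) / 2 ^ n + real (K n) / 3 ^ k n"
    by simp_all
  show ?thesis
  proof (rule achievable_classical_of_codebooks[OF K cb])
    fix n :: nat
    assume "n \<ge> 1"
    then have "real (card {g \<in> signs n. count_list g 1 < k n}) / 2 ^ n + real (K n) / 3 ^ k n \<le>
        1 / ((1 - 2 * \<sigma>)\<^sup>2 * real n) + 3 * q ^ n"
      unfolding K_def k_def q_def using \<rho> \<sigma>
      by (intro add_mono card_few_ones_fraction) (auto intro: pow_floor_ratio_le)
    with err2[of n]
    show "classical_err2 bc3 n (3 ^ n) (K n) (code_enc n (cb n)) (code_dec2 (K n) (cb n)) \<le>
        1 / (1 - 2 * \<sigma>)\<^sup>2 / real n + 3 * q ^ n"
      by simp
  next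
    have "0 < q" "q < 1"
      using \<sigma> by (auto simp: q_def intro: powr_less_one)
    then have "(\<lambda>n. 3 * q ^ n) \<longlonglongrightarrow> 0"
      by (intro tendsto_mult_right_zero LIMSEQ_power_zero) auto
    then show "(\<lambda>n. 1 / (1 - 2 * \<sigma>)\<^sup>2 / real n + 3 * q ^ n) \<longlonglongrightarrow> 0"
      by (intro tendsto_add_zero lim_const_over_n)
    show "rate_ge K (\<rho> * log 2 3)"
      unfolding K_def using rate_ge_pow_floor[of \<rho> 3] \<rho> by simp
  qed (use \<rho> in simp)
qed

lemma sum_capacity_classical_bc3: "is_sum_capacity (capacity_region bc3) (3 / 2 * log 2 3)"
  unfolding capacity_region_def
proof (rule is_sum_capacity_closureI)
  show "fst R + snd R \<le> 3 / 2 * log 2 3" if "R \<in> {R. achievable_classical bc3 R}" for R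
    using that achievable_classical_bc3_sum_rate_le by simp
  define \<rho> where "\<rho> j = 1 / 2 - (1 / 2) / real (Suc j)" for j
  have "\<rho> \<longlonglongrightarrow> 1 / 2 - 0"
    unfolding \<rho>_def by (intro tendsto_diff tendsto_const LIMSEQ_Suc[OF lim_const_over_n])
  then have "(\<lambda>j. (log 2 3, \<rho> j * log 2 3)) \<longlonglongrightarrow> (log 2 3, 1 / 2 * log 2 3)"
    by (intro tendsto_Pair tendsto_mult tendsto_const) simp_all
  moreover have "achievable_classical bc3 (log 2 3, \<rho> j * log 2 3)" for j
    by (rule achievable_classical_bc3) (auto simp: \<rho>_def field_simps)
  ultimately show "(log 2 3, 1 / 2 * log 2 3) \<in> closure {R. achievable_classical bc3 R}"
    unfolding closure_sequential by (intro exI[of _ "\<lambda>j. (log 2 3, \<rho> j * log 2 3)"]) auto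
qed simp

theorem theorem4:
  shows "semi_deterministic bc3 \<and>
         is_sum_capacity (capacity_region_ns bc3) (2 * log 2 3) \<and>
         is_sum_capacity (capacity_region bc3) (3/2 * log 2 3) \<and>
         (2 * log 2 3) / (3/2 * log 2 3) = (4/3 :: real)"
proof -
  have "0 < log 2 (3::real)"
    by simp
  then have "log 2 (3::real) \<noteq> 0"
    by linarith
  then show ?thesis
    using semi_deterministic_bc3 sum_capacity_ns_bc3 sum_capacity_classical_bc3 by simp
qed

end
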